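(* Let $d,d'\ge 1$, let $F:\mathbb{R}^d\to\mathbb{R}^d$, $A:\mathbb{R}^d\to\mathcal{S}^{d'}_{++}$, $b:\mathbb{R}^d\to\mathbb{R}^{d'}$, and let $Q(r,x)=\tfrac12 x^\top A(r)x-b(r)^\top x$. For a fixed final time $t_f>0$ independent of $\varepsilon$, let $(r_\star,p_\star)$ with $p_\star=\dot r_\star$ solve the exact dynamics $$\ddot r_\star=F(r_\star)-\frac{\partial Q}{\partial r}(r_\star,x_\star),\qquad 0=b(r_\star)-A(r_\star)x_\star,$$ and for $\varepsilon>0$ let $(r_\varepsilon,p_\varepsilon,x_\varepsilon,\dot x_\varepsilon)$ with $p_\varepsilon=\dot r_\varepsilon$ solve the extended Lagrangian dynamics (XLMD) $$\ddot r_\varepsilon=F(r_\varepsilon)-\frac{\partial Q}{\partial r}(r_\varepsilon,x_\varepsilon),\qquad \varepsilon\ddot x_\varepsilon=b(r_\varepsilon)-A(r_\varepsilon)x_\varepsilon,$$ on $[0,t_f]$. Assume: (i) $A$ is $C^3$ and there is $C>0$ with $A(r)\succeq C^{-1}I$ for all $r\in\mathbb{R}^d$; (ii) $b$ is $C^3$; (iii) $F$ is $C^2$; (iv) all initial values of $(r_\star,p_\star)$ and $(r_\varepsilon,p_\varepsilon,x_\varepsilon,\dot x_\varepsilon)$ are bounded independently of $\varepsilon$, and $r_\star(0)=r_\varepsilon(0)$, $p_\star(0)=p_\varepsilon(0)$; (v) both systems have unique solutions on $[0,t_f]$, the functions $r_\star,r_\varepsilon,x_\varepsilon$ are $C^3$,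 and there is a constant $C$ independent of $\varepsilon$ with $|d^kr_\star/dt^k|,|d^kr_\varepsilon/dt^k|\le C$ for $k=0,1,2$ and $|x_\varepsilon|,\sqrt{\varepsilon}|\dot x_\varepsilon|\le C$ on $[0,t_f]$. Assume moreover the initial condition for the latent variable is compatible, i.e. $x_\varepsilon(0)=A(r_\star(0))^{-1}b(r_\star(0))$ and $\dot x_\varepsilon(0)$ is bounded uniformly in $\varepsilon$. Then: (i) for general $d'$, there is a constant $C>0$ independent of $\varepsilon$ such that $|r_\varepsilon(t)-r_\star(t)|\le C\varepsilon^{1/2}$, $|p_\varepsilon(t)-p_\star(t)|\le C\varepsilon^{1/2}$ and $|x_\varepsilon(t)-x_\star(t)|\le C\varepsilon^{1/2}$ for all $t\in[0,t_f]$; (ii) if $d'=1$, then $|r_\varepsilon(t)-r_\star(t)|\le C\varepsilon$ and $|p_\varepsilon(t)-p_\star(t)|\le C\varepsilon$ for all $t\in[0,t_f]$; the bound $|x_\varepsilon(t)-x_\star(t)|\le C\varepsilon^{1/2}$ holds in general, and if the initial condition is moreover optimally compatible, i.e. additionally $$\dot x_\varepsilon(0)=-A(r_\star(0))^{-1}\Big[\sum_{k=1}^d\dot r_{\star,k}(0)\frac{\partial A}{\partial r_k}(r_\star(0))\Big]A(r_\star(0))^{-1}b(r_\star(0))+A(r_\star(0))^{-1}\Big[\sum_{k=1}^d\dot r_{\star,k}(0)\frac{\partial b}{\partial r_k}(r_\star(0))\Big],$$ then $|x_\varepsilon(t)-x_\star(t)|\le C\varepsilon$ for all $t\in[0,t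_f]$.
   Context: $\mathcal{S}^{d'}_{++}$ denotes the set of real symmetric positive definite $d'\times d'$ matrices. $\frac{\partial Q}{\partial r}(r,x)$ denotes the gradient of $Q$ in $r$, i.e. the vector with $k$-th entry $\tfrac12 x^\top\frac{\partial A}{\partial r_k}(r)x-\frac{\partial b}{\partial r_k}(r)^\top x$. The constant $C$ may depend on all problem data (including $t_f$) but not on $\varepsilon$. *)

theory Defs
  imports "HOL-Analysis.Analysis"
begin

definition C1_on :: "'a::real_normed_vector set \<Rightarrow> ('a \<Rightarrow> 'b::real_normed_vector) \<Rightarrow> bool" where
  "C1_on S f \<longleftrightarrow> (\<exists>f' :: 'a \<Rightarrow> 'a \<Rightarrow>\<^sub>L 'b.
      (\<forall>y\<in>S. (f has_derivative blinfun_apply (f' y)) (at y within S)) \<and> continuous_on S f')"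

definition C2_on :: "'a::real_normed_vector set \<Rightarrow> ('a \<Rightarrow> 'b::real_normed_vector) \<Rightarrow> bool" where
  "C2_on S f \<longleftrightarrow> (\<exists>f' :: 'a \<Rightarrow> 'a \<Rightarrow>\<^sub>L 'b.
      (\<forall>y\<in>S. (f has_derivative blinfun_apply (f' y)) (at y within S)) \<and> C1_on S f')"

definition C3_on :: "'a::real_normed_vector set \<Rightarrow> ('a \<Rightarrow> 'b::real_normed_vector) \<Rightarrow> bool" where
  "C3_on S f \<longleftrightarrow> (\<exists>f' :: 'a \<Rightarrow> 'a \<Rightarrow>\<^sub>L 'b.
      (\<forall>y\<in>S. (f has_derivative blinfun_apply (f' y)) (at y within S)) \<and> C2_on S f')"

definition partial :: "(real^'n \<Rightarrow> 'b::real_normed_vector) \<Rightarrow> real^'n \<Rightarrow> 'n \<Rightarrow> 'b" where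
  "partial f r k = frechet_derivative f (at r) (axis k 1)"

definition Qfun :: "(real^'n \<Rightarrow> real^'m^'m) \<Rightarrow> (real^'n \<Rightarrow> real^'m) \<Rightarrow> real^'n \<Rightarrow> real^'m \<Rightarrow> real" where
  "Qfun A b r x = (1/2) * (x \<bullet> (A r *v x)) - b r \<bullet> x"

definition dQdr :: "(real^'n \<Rightarrow> real^'m^'m) \<Rightarrow> (real^'n \<Rightarrow> real^'m) \<Rightarrow> real^'n \<Rightarrow> real^'m \<Rightarrow> real^'n" where
  "dQdr A b r x = (\<chi> k. (1/2) * (x \<bullet> (partial A r k *v x)) - partial b r k \<bullet> x)"

definition exact_sol :: "(real^'n \<Rightarrow> real^'n) \<Rightarrow> (real^'n \<Rightarrow> real^'m^'m) \<Rightarrow> (real^'n \<Rightarrow> real^'m)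
    \<Rightarrow> real \<Rightarrow> (real \<Rightarrow> real^'n) \<Rightarrow> (real \<Rightarrow> real^'n) \<Rightarrow> (real \<Rightarrow> real^'m) \<Rightarrow> bool" where
  "exact_sol F A b tf r p x \<longleftrightarrow> (\<forall>t\<in>{0..tf}.
      (r has_vector_derivative p t) (at t within {0..tf}) \<and>
      (p has_vector_derivative (F (r t) - dQdr A b (r t) (x t))) (at t within {0..tf}) \<and>
      b (r t) - A (r t) *v x t = 0)"

definition xlmd_sol :: "(real^'n \<Rightarrow> real^'n) \<Rightarrow> (real^'n \<Rightarrow> real^'m^'m) \<Rightarrow> (real^'n \<Rightarrow> real^'m)
    \<Rightarrow> real \<Rightarrow> real \<Rightarrow> (real \<Rightarrow> real^'n) \<Rightarrow> (real \<Rightarrow> real^'n) \<Rightarrow> (real \<Rightarrow> real^'m) \<Rightarrow> (real \<Rightarrow> real^'m) \<Rightarrow> bool" where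
  "xlmd_sol F A b tf eps r p x xd \<longleftrightarrow> (\<forall>t\<in>{0..tf}.
      (r has_vector_derivative p t) (at t within {0..tf}) \<and>
      (p has_vector_derivative (F (r t) - dQdr A b (r t) (x t))) (at t within {0..tf}) \<and>
      (x has_vector_derivative xd t) (at t within {0..tf}) \<and>
      (\<exists>xdd. (xd has_vector_derivative xdd) (at t within {0..tf}) \<and>
             eps *\<^sub>R xdd = b (r t) - A (r t) *v x t))"

end

theory Submission
  imports Defs
begin

text \<open>Write \<open>xstar r = A(r)\<^sup>-\<^sup>1 b(r)\<close> for the constrained value of the latent variable. Along an
  XLMD trajectory the deviation \<open>err = x - xstar r\<close> solves \<open>\<epsilon> err'' + A(r) err = - \<epsilon> (xstar r)''\<close>,
  a stiff oscillator with slowly varying, uniformly coercive stiffness. Its energy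
  \<open>\<epsilon>/2 |err'|\<^sup>2 + 1/2 err \<bullet> A(r) err\<close> starts at \<open>O(\<epsilon>)\<close> for compatible data and grows only through
  \<open>O(\<epsilon>)\<close> forcing, so Gronwall gives \<open>|err| = O(\<surd>\<epsilon>)\<close> and \<open>|err'| = O(1)\<close>.

  The force error splits into a part that is Lipschitz in \<open>r - rs\<close> and a part linear in \<open>err\<close>. As
  \<open>A(r) err = - \<epsilon> x''\<close>, the linear part is \<open>\<epsilon>\<close> times a time derivative up to \<open>O(\<epsilon>)\<close>; moving it into
  a modified momentum error, a second Gronwall argument gives \<open>|r - rs| + |p - ps| = O(\<epsilon>)\<close>, for
  any dimension of the latent variable. If also \<open>err'(0) = 0\<close>, integrating the forcing term of the
  energy by parts shows that the energy is \<open>O(\<epsilon>\<^sup>2)\<close>, hence \<open>|err| = O(\<epsilon>)\<close>. Since all trajectories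
  stay in a fixed ball, \<open>O(\<epsilon>)\<close> bounds also give \<open>O(\<surd>\<epsilon>)\<close> bounds for \<open>\<epsilon> > 1\<close>.\<close>

lemma norm_matrix_vector_mult_le:
  fixes M :: "real^'n^'m"
  shows "norm (M *v z) \<le> norm M * norm z"
proof -
  have "norm (M *v z) = L2_set (\<lambda>i. norm ((M *v z) $ i)) UNIV"
    by (simp add: norm_vec_def)
  also have "\<dots> \<le> L2_set (\<lambda>i. norm (M $ i) * norm z) UNIV"
  proof (rule L2_set_mono)
    fix i
    have "(M *v z) $ i = M $ i \<bullet> z" by (simp add: matrix_mult_dot)
    then show "norm ((M *v z) $ i) \<le> norm (M $ i) * norm z"
      by (simp add: Cauchy_Schwarz_ineq2)
  qed simp
  also have "\<dots> = norm z * L2_set (\<lambda>i. norm (M $ i)) UNIV"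
    by (subst L2_set_right_distrib) (auto simp: mult.commute)
  also have "\<dots> = norm M * norm z"
    by (simp add: norm_vec_def[of M])
  finally show ?thesis .
qed

lemma norm_matrix_vector_mult_bound: "norm (M::real^'a^'b) \<le> K \<Longrightarrow> norm (M *v u) \<le> K * norm u"
  by (meson norm_matrix_vector_mult_le mult_right_mono norm_ge_zero order.trans)

lemma scaleR_matrix_vector_mult: "((r::real) *\<^sub>R (M::real^'n^'m)) *v z = r *\<^sub>R (M *v z)"
  by (simp add: scaleR_matrix_vector_assoc)

lemma bounded_bilinear_matrix_vector_mult: "bounded_bilinear (\<lambda>(M::real^'n^'m) z. M *v z)"
proof
  fix M M' :: "real^'n^'m" and z z' :: "real^'n" and r :: real
  show "(M + M') *v z = M *v z + M' *v z" by (simp add: matrix_vector_mult_add_rdistrib)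
  show "M *v (z + z') = M *v z + M *v z'" by (simp add: matrix_vector_right_distrib)
  show "(r *\<^sub>R M) *v z = r *\<^sub>R (M *v z)" by (rule scaleR_matrix_vector_mult)
  show "M *v (r *\<^sub>R z) = r *\<^sub>R (M *v z)" by (simp add: matrix_vector_mult_scaleR)
next
  show "\<exists>K. \<forall>(M::real^'n^'m) z. norm (M *v z) \<le> norm M * norm z * K"
    by (rule exI[of _ 1]) (simp add: norm_matrix_vector_mult_le)
qed

lemma has_vector_derivative_matrix_vector_mult:
  fixes M :: "real \<Rightarrow> real^'n^'m"
  assumes "(M has_vector_derivative M') (at t within S)" "(z has_vector_derivative z') (at t within S)"
  shows "((\<lambda>t. M t *v z t) has_vector_derivative (M t *v z' + M' *v z t)) (at t within S)"
  using bounded_bilinear.has_vector_derivative[OF bounded_bilinear_matrix_vector_mult assms] by simp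

lemma has_real_derivative_inner:
  fixes u :: "real \<Rightarrow> 'a::real_inner"
  assumes "(u has_vector_derivative u') (at t within S)" "(z has_vector_derivative z') (at t within S)"
  shows "((\<lambda>t. u t \<bullet> z t) has_real_derivative (u t \<bullet> z' + u' \<bullet> z t)) (at t within S)"
  using bounded_bilinear.has_vector_derivative[OF bounded_bilinear_inner assms]
  by (simp add: has_real_derivative_iff_has_vector_derivative)

lemma has_vector_derivative_blinfun_apply:
  fixes f :: "real \<Rightarrow> 'a::real_normed_vector \<Rightarrow>\<^sub>L 'b::real_normed_vector"
  assumes "(f has_vector_derivative f') (at t within S)" "(z has_vector_derivative z') (at t within S)"
  shows "((\<lambda>t. f t (z t)) has_vector_derivative (f t z' + f' (z t))) (at t within S)"
  using bounded_bilinear.has_vector_derivative[OF bounded_bilinear_blinfun_apply assms] by simp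

lemma has_vector_derivative_chain:
  assumes "\<And>y. (f has_derivative blinfun_apply (f' y)) (at y)"
    and "(r has_vector_derivative p) (at t within S)"
  shows "((\<lambda>t. f (r t)) has_vector_derivative f' (r t) p) (at t within S)"
proof -
  have "(f has_derivative blinfun_apply (f' (r t))) (at (r t) within r ` S)"
    using assms(1) has_derivative_at_withinI by blast
  from diff_chain_within[OF assms(2)[unfolded has_vector_derivative_def] this]
  show ?thesis unfolding has_vector_derivative_def o_def
    by (simp add: blinfun.scaleR_right)
qed

lemma has_vector_derivative_vec_lambda:
  fixes f :: "real \<Rightarrow> 'k::finite \<Rightarrow> real"
  assumes "\<And>k. ((\<lambda>t. f t k) has_real_derivative f' k) (at t within S)"
  shows "((\<lambda>t. \<chi> k. f t k) has_vector_derivative (\<chi> k. f' k)) (at t within S)"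
  unfolding has_vector_derivative_def
proof (subst has_derivative_componentwise_within, intro ballI)
  fix i :: "real^'k" assume "i \<in> Basis"
  then obtain k where k: "i = axis k 1" by (auto simp: Basis_vec_def)
  have "((\<lambda>t. f t k) has_derivative (\<lambda>h. h * f' k)) (at t within S)"
    using assms[of k] unfolding has_field_derivative_def
    by (rule has_derivative_eq_rhs) (auto simp: mult.commute)
  then show "((\<lambda>x. (\<chi> k. f x k) \<bullet> i) has_derivative (\<lambda>x. x *\<^sub>R (\<chi> k. f' k) \<bullet> i)) (at t within S)"
    unfolding k by (simp add: inner_axis)
qed

lemma norm_blinfun_apply_bound: "norm f \<le> K \<Longrightarrow> norm h \<le> H \<Longrightarrow> norm (blinfun_apply f h) \<le> K * H"
  by (meson norm_blinfun mult_mono norm_ge_zero order.trans)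

lemma norm_blinfun_add_apply_bound:
  "norm f \<le> K \<Longrightarrow> norm g \<le> L \<Longrightarrow> norm h \<le> H \<Longrightarrow> norm (blinfun_apply (f + g) h) \<le> (K + L) * H"
  by (rule norm_blinfun_apply_bound) (auto intro: order.trans[OF norm_triangle_ineq])

lemma norm_blinfun_axis_le: "norm (blinfun_apply f (axis k (1::real))) \<le> norm f"
  using norm_blinfun[of f "axis k 1"] by simp

lemma norm_vec_lambda_le:
  assumes "\<And>k. \<bar>f k\<bar> \<le> B"
  shows "norm (\<chi> k. f k :: real^'k) \<le> real CARD('k) * B"
proof -
  have "norm (\<chi> k. f k :: real^'k) \<le> (\<Sum>k\<in>UNIV. \<bar>(\<chi> k. f k :: real^'k) $ k\<bar>)"
    by (rule norm_le_l1_cart)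
  also have "\<dots> \<le> (\<Sum>k\<in>(UNIV::'k set). B)" using assms by (intro sum_mono) simp
  finally show ?thesis by simp
qed

lemma norm_diff_diff_le: "norm (a - b - c) \<le> norm a + norm b + norm (c::'a::real_normed_vector)"
  by (smt (verit) norm_triangle_ineq4)

lemma inner_symmetric_matrix_commute:
  fixes M :: "real^'m^'m"
  assumes "transpose M = M"
  shows "u \<bullet> (M *v z) = z \<bullet> (M *v u)"
  by (metis assms dot_lmul_matrix inner_commute vector_transpose_matrix)

lemma symmetric_derivative:
  fixes A :: "'a::real_normed_vector \<Rightarrow> real^'m^'m"
  assumes sym: "\<And>r. transpose (A r) = A r"
    and deriv: "(A has_derivative blinfun_apply D) (at r)"
  shows "transpose (D h) = D h"
proof -
  have "bounded_linear (transpose :: real^'m^'m \<Rightarrow> real^'m^'m)"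
    by (auto simp: linear_iff transpose_def vec_eq_iff intro: linear_conv_bounded_linear[THEN iffD1])
  from bounded_linear.has_derivative[OF this deriv]
  have "(A has_derivative (\<lambda>h. transpose (D h))) (at r)" using sym by simp
  then have "(\<lambda>h. transpose (D h)) = blinfun_apply D"
    using deriv by (rule has_derivative_unique)
  then show ?thesis by metis
qed

lemma quadratic_form_diff_bound:
  fixes M1 M2 :: "real^'m^'m"
  shows "\<bar>x1 \<bullet> (M1 *v x1) - x2 \<bullet> (M2 *v x2)\<bar> \<le> norm (x1 - x2) * norm M1 * norm x1
     + norm x2 * norm (M1 - M2) * norm x1 + norm x2 * norm M2 * norm (x1 - x2)"
proof -
  have "\<bar>u \<bullet> (M *v z)\<bar> \<le> norm u * norm M * norm z" for u z and M :: "real^'m^'m"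
    using Cauchy_Schwarz_ineq2[of u "M *v z"] norm_matrix_vector_mult_le[of M z]
    by (smt (verit, best) mult.assoc mult_left_mono norm_ge_zero)
  moreover have "x1 \<bullet> (M1 *v x1) - x2 \<bullet> (M2 *v x2)
      = (x1 - x2) \<bullet> (M1 *v x1) + x2 \<bullet> ((M1 - M2) *v x1) + x2 \<bullet> (M2 *v (x1 - x2))"
    by (simp add: inner_diff_left inner_diff_right matrix_vector_mult_diff_distrib
        matrix_vector_mult_diff_rdistrib)
  ultimately show ?thesis
    by (smt (verit) abs_triangle_ineq)
qed

lemma inner_diff_bound:
  fixes x1 x2 :: "'a::real_inner"
  shows "\<bar>\<beta>1 \<bullet> x1 - \<beta>2 \<bullet> x2\<bar> \<le> norm (\<beta>1 - \<beta>2) * norm x1 + norm \<beta>2 * norm (x1 - x2)"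
proof -
  have "\<beta>1 \<bullet> x1 - \<beta>2 \<bullet> x2 = (\<beta>1 - \<beta>2) \<bullet> x1 + \<beta>2 \<bullet> (x1 - x2)"
    by (simp add: inner_diff_left inner_diff_right)
  then show ?thesis
    using Cauchy_Schwarz_ineq2[of "\<beta>1 - \<beta>2" x1] Cauchy_Schwarz_ineq2[of \<beta>2 "x1 - x2"] by linarith
qed


section \<open>Linear systems with a coercive matrix\<close>

lemma matrix_inv_right_if_coercive:
  fixes M :: "real^'m^'m"
  assumes "\<forall>u. norm u \<le> K * norm (M *v u)"
  shows "M *v (matrix_inv M *v z) = z"
proof -
  have "\<forall>x. M *v x = 0 \<longrightarrow> x = 0" using assms by (metis mult_zero_right norm_le_zero_iff norm_zero)
  then have "invertible M" using matrix_left_invertible_ker invertible_left_inverse by blast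
  then have "M ** matrix_inv M = mat 1"
    unfolding invertible_def matrix_inv_def by (metis (mono_tags, lifting) someI_ex)
  then show ?thesis by (metis matrix_vector_mul_assoc matrix_vector_mul_lid)
qed

lemma continuous_within_linear_solution:
  fixes M :: "real \<Rightarrow> real^'m^'m" and y c :: "real \<Rightarrow> real^'m"
  assumes eq: "\<forall>s\<in>S. M s *v y s = c s" and t: "t \<in> S"
    and coercive: "\<forall>s\<in>S. \<forall>u. norm u \<le> K * norm (M s *v u)"
    and M: "continuous (at t within S) M" and c: "continuous (at t within S) c"
  shows "continuous (at t within S) y"
proof -
  have "M s *v (y s - y t) = c s - c t - (M s - M t) *v y t" if "s \<in> S" for s
    using eq that t by (simp add: matrix_vector_mult_diff_distrib matrix_vector_mult_diff_rdistrib)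
  then have "norm (y s - y t) \<le> K * norm (c s - c t - (M s - M t) *v y t)" if "s \<in> S" for s
    using coercive that by metis
  then have le: "\<forall>\<^sub>F s in at t within S. norm (y s - y t) \<le> K * norm (c s - c t - (M s - M t) *v y t)"
    by (auto simp: eventually_at_filter intro!: always_eventually)
  have "((\<lambda>s. K * norm (c s - c t - (M s - M t) *v y t)) \<longlongrightarrow> K * norm (c t - c t - (M t - M t) *v y t))
      (at t within S)"
    using M c unfolding continuous_within
    by (intro tendsto_intros bounded_bilinear.tendsto[OF bounded_bilinear_matrix_vector_mult])
  then have "((\<lambda>s. y s - y t) \<longlongrightarrow> 0) (at t within S)"
    by (intro Lim_null_comparison[OF le]) simp
  then show ?thesis by (simp add: continuous_within LIM_zero_iff)
qed

lemma coercive_constant_nonneg: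
  fixes M :: "real^'m^'m"
  assumes "\<forall>u. norm u \<le> K * norm (M *v u)"
  shows "K \<ge> 0"
proof (rule ccontr)
  assume "\<not> K \<ge> 0"
  then have "K * norm (M *v axis undefined 1) \<le> 0" by (simp add: mult_nonpos_nonneg)
  moreover have "norm (axis undefined 1 :: real^'m) \<le> K * norm (M *v axis undefined 1)"
    using assms by blast
  ultimately show False by simp
qed

lemma linear_solution_increment_le:
  fixes M :: "real \<Rightarrow> real^'m^'m" and y c :: "real \<Rightarrow> real^'m"
  assumes eq: "M s *v y s = c s" "M t *v y t = c t"
    and coercive: "\<forall>u. norm u \<le> K * norm (M t *v u)"
    and u: "M t *v u = c' - M' *v y t"
  shows "norm (y s - y t - (s - t) *\<^sub>R u) \<le> K * (norm (c s - c t - (s - t) *\<^sub>R c')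
    + norm (M s - M t - (s - t) *\<^sub>R M') * norm (y s) + \<bar>s - t\<bar> * (norm M' * norm (y s - y t)))"
proof -
  let ?X1 = "c s - c t - (s - t) *\<^sub>R c'"
  let ?X2 = "(M s - M t - (s - t) *\<^sub>R M') *v y s"
  let ?X3 = "(s - t) *\<^sub>R (M' *v (y s - y t))"
  have K: "K \<ge> 0" using coercive by (rule coercive_constant_nonneg)
  have c': "c' = M t *v u + M' *v y t" using u by (simp add: algebra_simps)
  have "M t *v (y s - y t - (s - t) *\<^sub>R u) = ?X1 - ?X2 - ?X3"
    unfolding c' using eq
    by (simp add: matrix_vector_mult_diff_distrib matrix_vector_mult_diff_rdistrib
        matrix_vector_mult_add_rdistrib scaleR_diff_right algebra_simps scaleR_matrix_vector_mult)
  then have "norm (y s - y t - (s - t) *\<^sub>R u) \<le> K * norm (?X1 - ?X2 - ?X3)"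
    using coercive by metis
  also have "\<dots> \<le> K * (norm ?X1 + norm ?X2 + norm ?X3)"
    using K by (intro mult_left_mono norm_diff_diff_le) auto
  also have "\<dots> \<le> K * (norm ?X1 + norm (M s - M t - (s - t) *\<^sub>R M') * norm (y s)
      + \<bar>s - t\<bar> * (norm M' * norm (y s - y t)))"
    using K by (intro mult_left_mono add_mono order.refl)
      (auto simp: norm_matrix_vector_mult_le mult_left_mono)
  finally show ?thesis .
qed

lemma has_vector_derivative_linear_solution:
  fixes M :: "real \<Rightarrow> real^'m^'m" and y c :: "real \<Rightarrow> real^'m"
  assumes eq: "\<forall>s\<in>S. M s *v y s = c s" and t: "t \<in> S"
    and coercive: "\<forall>s\<in>S. \<forall>u. norm u \<le> K * norm (M s *v u)"
    and M': "(M has_vector_derivative M') (at t within S)"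
    and c': "(c has_vector_derivative c') (at t within S)"
    and u: "M t *v u = c' - M' *v y t"
  shows "(y has_vector_derivative u) (at t within S)"
proof -
  have K: "K \<ge> 0" using coercive t by (blast intro: coercive_constant_nonneg)
  have "continuous (at t within S) y"
    using continuous_within_linear_solution[OF eq t coercive] M' c'
    by (simp add: has_vector_derivative_continuous)
  then have yc: "(y \<longlongrightarrow> y t) (at t within S)" by (simp add: continuous_within)
  have dM: "((\<lambda>s. norm (M s - M t - (s - t) *\<^sub>R M') / norm (s - t)) \<longlongrightarrow> 0) (at t within S)"
    and dc: "((\<lambda>s. norm (c s - c t - (s - t) *\<^sub>R c') / norm (s - t)) \<longlongrightarrow> 0) (at t within S)"
    using M' c' unfolding has_vector_derivative_def has_derivative_iff_norm by simp_all
  define B where "B s = K * (norm (c s - c t - (s - t) *\<^sub>R c') / norm (s - t)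
     + norm (M s - M t - (s - t) *\<^sub>R M') / norm (s - t) * norm (y s) + norm M' * norm (y s - y t))" for s
  have "(B \<longlongrightarrow> K * (0 + 0 * norm (y t) + norm M' * norm (y t - y t))) (at t within S)"
    unfolding B_def by (intro tendsto_intros dc dM yc)
  then have B0: "(B \<longlongrightarrow> 0) (at t within S)" by simp
  have "norm (y s - y t - (s - t) *\<^sub>R u) / norm (s - t) \<le> B s" if s: "s \<in> S" "s \<noteq> t" for s
    using linear_solution_increment_le[of M s y c t K u c' M'] eq s t coercive u K
    by (simp add: B_def divide_simps algebra_simps)
  then have "\<forall>\<^sub>F s in at t within S. norm (norm (y s - y t - (s - t) *\<^sub>R u) / norm (s - t)) \<le> B s"
    unfolding eventually_at_filter by (auto intro!: always_eventually)
  from Lim_null_comparison[OF this B0] show ?thesis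
    unfolding has_vector_derivative_def has_derivative_iff_norm
    by (simp add: bounded_linear_scaleR_left)
qed

lemma gronwall_differential:
  fixes V V' :: "real \<Rightarrow> real"
  assumes a: "a > 0" and c: "c \<ge> 0"
    and deriv: "\<forall>s\<in>{0..T}. (V has_real_derivative V' s) (at s within {0..T})"
    and le: "\<forall>s\<in>{0..T}. V' s \<le> a * V s + c"
    and t: "t \<in> {0..T}"
  shows "V t \<le> (V 0 + c / a) * exp (a * t)"
proof -
  define W where "W s = (V s + c / a) * exp (- a * s)" for s
  have dW: "(W has_real_derivative (V' s - a * V s - c) * exp (- a * s)) (at s within {0..T})"
    if "s \<in> {0..T}" for s
    unfolding W_def using deriv that a
    by (auto intro!: derivative_eq_intros simp: algebra_simps)
  have "W t \<le> W 0"
  proof (rule DERIV_nonpos_imp_decreasing_open[of 0 t W])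
    show "0 \<le> t" using t by simp
    show "continuous_on {0..t} W" using t dW
      by (meson DERIV_continuous continuous_on_eq_continuous_within continuous_on_subset
          atLeastAtMost_iff atLeastatMost_subset_iff order_refl)
    fix x assume x: "0 < x" "x < t"
    then have "at x within {0..T} = at x" using t by (intro at_within_interior) auto
    then have "(W has_real_derivative (V' x - a * V x - c) * exp (- a * x)) (at x)"
      using dW[of x] x t by auto
    moreover have "(V' x - a * V x - c) * exp (- a * x) \<le> 0"
      using le[rule_format, of x] x t by (intro mult_nonpos_nonneg) auto
    ultimately show "\<exists>y. (W has_real_derivative y) (at x) \<and> y \<le> 0" by blast
  qed
  then have "V t + c / a \<le> (V 0 + c / a) * exp (a * t)"
    by (simp add: W_def exp_minus field_simps)
  then show ?thesis using a c by (smt (verit) divide_nonneg_pos)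
qed

lemma continuous_bounded_cball:
  fixes f :: "'a::euclidean_space \<Rightarrow> 'b::real_normed_vector"
  assumes "continuous_on UNIV f"
  obtains B where "\<forall>y\<in>cball 0 R. norm (f y) \<le> B"
proof -
  have "compact (f ` cball 0 R)"
    using assms by (intro compact_continuous_image) (auto intro: continuous_on_subset)
  then show ?thesis using that compact_imp_bounded bounded_iff by (metis image_eqI)
qed

lemma lipschitz_cball_if_derivative_bounded:
  fixes f :: "'a::euclidean_space \<Rightarrow> 'b::real_normed_vector"
  assumes "\<And>y. (f has_derivative blinfun_apply (f' y)) (at y)"
    and "\<And>y. norm y \<le> R \<Longrightarrow> norm (f' y) \<le> B"
    and "norm x \<le> R" "norm z \<le> R"
  shows "norm (f x - f z) \<le> B * norm (x - z)"
proof (rule differentiable_bound[where S="cball 0 R" and f'="\<lambda>y. blinfun_apply (f' y)"])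
  fix y :: 'a assume "y \<in> cball 0 R"
  show "(f has_derivative blinfun_apply (f' y)) (at y within cball 0 R)"
    using assms(1) has_derivative_at_withinI by blast
  show "onorm (blinfun_apply (f' y)) \<le> B"
    using assms(2) \<open>y \<in> cball 0 R\<close> by (simp add: norm_blinfun.rep_eq[symmetric])
qed (use assms in auto)

lemma abs_half_sum_diff_le:
  fixes X1 X2 X3 X4 :: real
  assumes "\<bar>X1\<bar> \<le> c1" "\<bar>X2\<bar> \<le> c2" "\<bar>X3\<bar> \<le> c3" "\<bar>X4\<bar> \<le> c4"
  shows "\<bar>1/2 * (X1 + X2) - (X3 + X4)\<bar> \<le> 1/2 * (c1 + c2) + (c3 + c4)"
proof -
  have "\<bar>X1 + X2\<bar> \<le> c1 + c2" "\<bar>X3 + X4\<bar> \<le> c3 + c4"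
    using abs_triangle_ineq[of X1 X2] abs_triangle_ineq[of X3 X4] assms by linarith+
  moreover from this(1) have "\<bar>1/2 * (X1 + X2)\<bar> \<le> 1/2 * (c1 + c2)" by (simp add: abs_mult)
  ultimately show ?thesis
    using abs_triangle_ineq4[of "1/2 * (X1 + X2)" "X3 + X4"] by linarith
qed

lemma le_sqrt_if_le_linear_and_bounded:
  fixes a K B eps :: real
  assumes "a \<le> K * eps" "a \<le> B" "0 < eps" "0 \<le> K" "0 \<le> B"
  shows "a \<le> (K + B) * sqrt eps"
proof (cases "eps \<le> 1")
  case True
  have "sqrt eps * sqrt eps \<le> sqrt eps * 1" using True assms(3) by (intro mult_left_mono) auto
  then have "eps \<le> sqrt eps" using assms(3) by simp
  then have "K * eps \<le> K * sqrt eps" using assms(4) by (rule mult_left_mono)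
  moreover have "0 \<le> B * sqrt eps" using assms(3,5) by simp
  ultimately show ?thesis using assms(1) unfolding distrib_right by linarith
next
  case False
  then have "B \<le> B * sqrt eps" using assms(5) by (simp add: mult_le_cancel_left1)
  moreover have "0 \<le> K * sqrt eps" using assms(3,4) by simp
  ultimately show ?thesis using assms(2) unfolding distrib_right by linarith
qed


section \<open>Smooth coefficients on a ball\<close>

text \<open>\<open>c0\<close> is the \<open>C\<close> of \<open>A \<ge> C\<^sup>-\<^sup>1 I\<close> and \<open>R\<close> the radius of a ball containing all trajectories.
  The constants below are built from these data only, so none of them depends on \<open>\<epsilon>\<close>.\<close>

locale xlmd_coefficients =
  fixes F :: "real^'n \<Rightarrow> real^'n" and A :: "real^'n \<Rightarrow> real^'m^'m" and b :: "real^'n \<Rightarrow> real^'m"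
    and DA :: "real^'n \<Rightarrow> ((real^'n) \<Rightarrow>\<^sub>L (real^'m^'m))"
    and D2A :: "real^'n \<Rightarrow> ((real^'n) \<Rightarrow>\<^sub>L ((real^'n) \<Rightarrow>\<^sub>L (real^'m^'m)))"
    and D3A :: "real^'n \<Rightarrow> ((real^'n) \<Rightarrow>\<^sub>L ((real^'n) \<Rightarrow>\<^sub>L ((real^'n) \<Rightarrow>\<^sub>L (real^'m^'m))))"
    and Db :: "real^'n \<Rightarrow> ((real^'n) \<Rightarrow>\<^sub>L (real^'m))"
    and D2b :: "real^'n \<Rightarrow> ((real^'n) \<Rightarrow>\<^sub>L ((real^'n) \<Rightarrow>\<^sub>L (real^'m)))"
    and D3b :: "real^'n \<Rightarrow> ((real^'n) \<Rightarrow>\<^sub>L ((real^'n) \<Rightarrow>\<^sub>L ((real^'n) \<Rightarrow>\<^sub>L (real^'m))))"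
    and DF :: "real^'n \<Rightarrow> ((real^'n) \<Rightarrow>\<^sub>L (real^'n))"
    and c0 R tf :: real
    and MA1 MA2 MA3 Mb0 Mb1 Mb2 Mb3 MF1 :: real
  assumes A_deriv: "\<And>y. (A has_derivative blinfun_apply (DA y)) (at y)"
    and DA_deriv: "\<And>y. (DA has_derivative blinfun_apply (D2A y)) (at y)"
    and D2A_deriv: "\<And>y. (D2A has_derivative blinfun_apply (D3A y)) (at y)"
    and b_deriv: "\<And>y. (b has_derivative blinfun_apply (Db y)) (at y)"
    and Db_deriv: "\<And>y. (Db has_derivative blinfun_apply (D2b y)) (at y)"
    and D2b_deriv: "\<And>y. (D2b has_derivative blinfun_apply (D3b y)) (at y)"
    and F_deriv: "\<And>y. (F has_derivative blinfun_apply (DF y)) (at y)"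
    and A_symmetric: "\<And>r. transpose (A r) = A r"
    and A_coercive: "\<And>r u. (norm u)\<^sup>2 \<le> c0 * (u \<bullet> (A r *v u))"
    and c0: "c0 > 0" and R: "R > 0" and tf: "tf > 0"
    and bound_DA: "\<And>y. norm y \<le> R \<Longrightarrow> norm (DA y) \<le> MA1"
    and bound_D2A: "\<And>y. norm y \<le> R \<Longrightarrow> norm (D2A y) \<le> MA2"
    and bound_D3A: "\<And>y. norm y \<le> R \<Longrightarrow> norm (D3A y) \<le> MA3"
    and bound_b: "\<And>y. norm y \<le> R \<Longrightarrow> norm (b y) \<le> Mb0"
    and bound_Db: "\<And>y. norm y \<le> R \<Longrightarrow> norm (Db y) \<le> Mb1"
    and bound_D2b: "\<And>y. norm y \<le> R \<Longrightarrow> norm (D2b y) \<le> Mb2"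
    and bound_D3b: "\<And>y. norm y \<le> R \<Longrightarrow> norm (D3b y) \<le> Mb3"
    and bound_DF: "\<And>y. norm y \<le> R \<Longrightarrow> norm (DF y) \<le> MF1"
begin

lemma bounds_nonneg:
  "MA1 \<ge> 0" "MA2 \<ge> 0" "MA3 \<ge> 0" "Mb0 \<ge> 0" "Mb1 \<ge> 0" "Mb2 \<ge> 0" "Mb3 \<ge> 0" "MF1 \<ge> 0"
  using bound_DA[of 0] bound_D2A[of 0] bound_D3A[of 0] bound_b[of 0] bound_Db[of 0]
    bound_D2b[of 0] bound_D3b[of 0] bound_DF[of 0] R
  by (auto intro: order.trans[OF norm_ge_zero])

lemma A_coercive_norm: "norm u \<le> c0 * norm (A r *v u)"
proof (cases "u = 0")
  case False
  have "(norm u)\<^sup>2 \<le> c0 * (norm u * norm (A r *v u))"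
    using A_coercive[of u r] norm_cauchy_schwarz[of u "A r *v u"] c0 by (smt (verit) mult_left_mono)
  then show ?thesis using False by (simp add: power2_eq_square algebra_simps)
qed (use c0 in simp)

lemma partial_A_eq: "partial A r k = DA r (axis k 1)"
  unfolding partial_def using frechet_derivative_at[OF A_deriv[of r]] by simp

lemma partial_b_eq: "partial b r k = Db r (axis k 1)"
  unfolding partial_def using frechet_derivative_at[OF b_deriv[of r]] by simp

lemma dQdr_component: "dQdr A b r x $ k = 1/2 * (x \<bullet> (DA r (axis k 1) *v x)) - Db r (axis k 1) \<bullet> x"
  by (simp add: dQdr_def partial_A_eq partial_b_eq)

lemma DA_symmetric: "transpose (DA r h) = DA r h"
  by (rule symmetric_derivative[OF A_symmetric A_deriv])

lemma A_matrix_inv_right: "A r *v (matrix_inv (A r) *v z) = z"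
  by (rule matrix_inv_right_if_coercive) (use A_coercive_norm in blast)

lemma norm_A_inv_le: "norm (matrix_inv (A r) *v z) \<le> c0 * norm z"
  using A_coercive_norm[of "matrix_inv (A r) *v z" r] A_matrix_inv_right by simp

lemma A_solve_unique:
  assumes "A r *v u = z"
  shows "u = matrix_inv (A r) *v z"
proof -
  have "norm (u - matrix_inv (A r) *v z) \<le> c0 * norm (A r *v (u - matrix_inv (A r) *v z))"
    by (rule A_coercive_norm)
  also have "A r *v (u - matrix_inv (A r) *v z) = 0"
    using assms A_matrix_inv_right by (simp add: matrix_vector_mult_diff_distrib)
  finally show ?thesis by simp
qed

definition xstar where "xstar r = matrix_inv (A r) *v b r"

definition xstar_deriv where "xstar_deriv r q = matrix_inv (A r) *v (Db r q - DA r q *v xstar r)"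

definition exact_force where "exact_force r = F r - dQdr A b r (xstar r)"

lemma A_xstar: "A r *v xstar r = b r"
  unfolding xstar_def by (rule A_matrix_inv_right)

definition "Xa0 = c0 * Mb0"

lemma norm_xstar_le: "norm r \<le> R \<Longrightarrow> norm (xstar r) \<le> Xa0"
  unfolding xstar_def Xa0_def using norm_A_inv_le bound_b c0
  by (meson mult_left_mono order.trans less_imp_le)

lemma lipschitz_A: "norm r1 \<le> R \<Longrightarrow> norm r2 \<le> R \<Longrightarrow> norm (A r1 - A r2) \<le> MA1 * norm (r1 - r2)"
  by (rule lipschitz_cball_if_derivative_bounded[OF A_deriv]) (use bound_DA in auto)

lemma lipschitz_DA: "norm r1 \<le> R \<Longrightarrow> norm r2 \<le> R \<Longrightarrow> norm (DA r1 - DA r2) \<le> MA2 * norm (r1 - r2)"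
  by (rule lipschitz_cball_if_derivative_bounded[OF DA_deriv]) (use bound_D2A in auto)

lemma lipschitz_b: "norm r1 \<le> R \<Longrightarrow> norm r2 \<le> R \<Longrightarrow> norm (b r1 - b r2) \<le> Mb1 * norm (r1 - r2)"
  by (rule lipschitz_cball_if_derivative_bounded[OF b_deriv]) (use bound_Db in auto)

lemma lipschitz_Db: "norm r1 \<le> R \<Longrightarrow> norm r2 \<le> R \<Longrightarrow> norm (Db r1 - Db r2) \<le> Mb2 * norm (r1 - r2)"
  by (rule lipschitz_cball_if_derivative_bounded[OF Db_deriv]) (use bound_D2b in auto)

lemma lipschitz_F: "norm r1 \<le> R \<Longrightarrow> norm r2 \<le> R \<Longrightarrow> norm (F r1 - F r2) \<le> MF1 * norm (r1 - r2)"
  by (rule lipschitz_cball_if_derivative_bounded[OF F_deriv]) (use bound_DF in auto)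

definition "Lxstar = c0 * (Mb1 + MA1 * Xa0)"

lemma lipschitz_xstar:
  assumes "norm r1 \<le> R" "norm r2 \<le> R"
  shows "norm (xstar r1 - xstar r2) \<le> Lxstar * norm (r1 - r2)"
proof -
  have "A r1 *v (xstar r1 - xstar r2) = (b r1 - b r2) - (A r1 - A r2) *v xstar r2"
    using A_xstar[of r1] A_xstar[of r2]
    by (simp add: matrix_vector_mult_diff_distrib matrix_vector_mult_diff_rdistrib)
  then have "norm (xstar r1 - xstar r2) \<le> c0 * norm ((b r1 - b r2) - (A r1 - A r2) *v xstar r2)"
    using A_coercive_norm by metis
  also have "\<dots> \<le> c0 * (norm (b r1 - b r2) + norm ((A r1 - A r2) *v xstar r2))"
    using c0 by (intro mult_left_mono norm_triangle_ineq4) auto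
  also have "\<dots> \<le> c0 * (Mb1 * norm (r1 - r2) + MA1 * norm (r1 - r2) * Xa0)"
  proof (intro mult_left_mono add_mono)
    show "norm (b r1 - b r2) \<le> Mb1 * norm (r1 - r2)" using lipschitz_b assms by blast
    have "norm ((A r1 - A r2) *v xstar r2) \<le> norm (A r1 - A r2) * norm (xstar r2)"
      by (rule norm_matrix_vector_mult_le)
    also have "\<dots> \<le> MA1 * norm (r1 - r2) * Xa0"
      using lipschitz_A[OF assms] norm_xstar_le[OF assms(2)]
      by (intro mult_mono) (auto simp: bounds_nonneg)
    finally show "norm ((A r1 - A r2) *v xstar r2) \<le> MA1 * norm (r1 - r2) * Xa0" .
  qed (use c0 in auto)
  finally show ?thesis by (simp add: Lxstar_def algebra_simps)
qed

lemma dQdr_component_diff_bound: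
  assumes r: "norm r1 \<le> R" "norm r2 \<le> R" and x: "norm x1 \<le> X" "norm x2 \<le> X"
  shows "\<bar>dQdr A b r1 x1 $ k - dQdr A b r2 x2 $ k\<bar>
    \<le> (MA1 * X + Mb1) * norm (x1 - x2) + (1/2 * X * X * MA2 + X * Mb2) * norm (r1 - r2)"
proof -
  define M1 M2 where "M1 = DA r1 (axis k 1)" and "M2 = DA r2 (axis k 1)"
  define \<beta>1 \<beta>2 where "\<beta>1 = Db r1 (axis k 1)" and "\<beta>2 = Db r2 (axis k 1)"
  have X: "X \<ge> 0" using x norm_ge_zero order.trans by blast
  have M1: "norm M1 \<le> MA1" and M2: "norm M2 \<le> MA1" and \<beta>2: "norm \<beta>2 \<le> Mb1"
    unfolding M1_def M2_def \<beta>2_def using norm_blinfun_axis_le bound_DA bound_Db r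
    by (meson order.trans)+
  have M12: "norm (M1 - M2) \<le> MA2 * norm (r1 - r2)"
    using norm_blinfun_axis_le[of "DA r1 - DA r2" k] lipschitz_DA[OF r]
    by (simp add: M1_def M2_def blinfun.diff_left)
  have \<beta>12: "norm (\<beta>1 - \<beta>2) \<le> Mb2 * norm (r1 - r2)"
    using norm_blinfun_axis_le[of "Db r1 - Db r2" k] lipschitz_Db[OF r]
    by (simp add: \<beta>1_def \<beta>2_def blinfun.diff_left)
  have "norm (x1 - x2) * norm M1 * norm x1 \<le> norm (x1 - x2) * MA1 * X"
    using M1 x by (intro mult_mono) (auto simp: bounds_nonneg)
  moreover have "norm x2 * norm (M1 - M2) * norm x1 \<le> X * (MA2 * norm (r1 - r2)) * X"
    using M12 x X by (intro mult_mono) (auto simp: bounds_nonneg)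
  moreover have "norm x2 * norm M2 * norm (x1 - x2) \<le> X * MA1 * norm (x1 - x2)"
    using M2 x X by (intro mult_mono) (auto simp: bounds_nonneg)
  ultimately have quadratic: "\<bar>x1 \<bullet> (M1 *v x1) - x2 \<bullet> (M2 *v x2)\<bar>
      \<le> norm (x1 - x2) * MA1 * X + X * (MA2 * norm (r1 - r2)) * X + X * MA1 * norm (x1 - x2)"
    using quadratic_form_diff_bound[of x1 M1 x2 M2] by linarith
  have "norm (\<beta>1 - \<beta>2) * norm x1 \<le> Mb2 * norm (r1 - r2) * X"
    using \<beta>12 x by (intro mult_mono) (auto simp: bounds_nonneg)
  moreover have "norm \<beta>2 * norm (x1 - x2) \<le> Mb1 * norm (x1 - x2)"
    using \<beta>2 by (intro mult_right_mono) auto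
  ultimately have linear: "\<bar>\<beta>1 \<bullet> x1 - \<beta>2 \<bullet> x2\<bar> \<le> Mb2 * norm (r1 - r2) * X + Mb1 * norm (x1 - x2)"
    using inner_diff_bound[of \<beta>1 x1 \<beta>2 x2] by linarith
  show ?thesis
    unfolding dQdr_component M1_def[symmetric] M2_def[symmetric] \<beta>1_def[symmetric] \<beta>2_def[symmetric]
    using quadratic linear by (simp add: abs_le_iff algebra_simps) linarith?
qed

lemma lipschitz_dQdr:
  assumes "norm r1 \<le> R" "norm r2 \<le> R" "norm x1 \<le> X" "norm x2 \<le> X"
  shows "norm (dQdr A b r1 x1 - dQdr A b r2 x2) \<le> real CARD('n) * ((MA1 * X + Mb1) * norm (x1 - x2)
      + (1/2 * X * X * MA2 + X * Mb2) * norm (r1 - r2))"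
proof -
  have "dQdr A b r1 x1 - dQdr A b r2 x2 = (\<chi> k. dQdr A b r1 x1 $ k - dQdr A b r2 x2 $ k)"
    by (simp add: vec_eq_iff)
  then show ?thesis
    using dQdr_component_diff_bound[OF assms] by (simp add: norm_vec_lambda_le)
qed

definition "Lforce =
  MF1 + real CARD('n) * ((MA1 * Xa0 + Mb1) * Lxstar + (1/2 * Xa0 * Xa0 * MA2 + Xa0 * Mb2))"

lemma lipschitz_exact_force:
  assumes r: "norm r1 \<le> R" "norm r2 \<le> R"
  shows "norm (exact_force r1 - exact_force r2) \<le> Lforce * norm (r1 - r2)"
proof -
  have Xa0: "Xa0 \<ge> 0" unfolding Xa0_def using c0 bounds_nonneg by simp
  have "exact_force r1 - exact_force r2 = (F r1 - F r2) - (dQdr A b r1 (xstar r1) - dQdr A b r2 (xstar r2))"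
    by (simp add: exact_force_def)
  then have "norm (exact_force r1 - exact_force r2)
      \<le> norm (F r1 - F r2) + norm (dQdr A b r1 (xstar r1) - dQdr A b r2 (xstar r2))"
    by (metis norm_triangle_ineq4)
  also have "\<dots> \<le> MF1 * norm (r1 - r2) + real CARD('n) * ((MA1 * Xa0 + Mb1) * (Lxstar * norm (r1 - r2))
      + (1/2 * Xa0 * Xa0 * MA2 + Xa0 * Mb2) * norm (r1 - r2))"
  proof (intro add_mono)
    show "norm (F r1 - F r2) \<le> MF1 * norm (r1 - r2)" using lipschitz_F r by blast
    have "norm (dQdr A b r1 (xstar r1) - dQdr A b r2 (xstar r2)) \<le> real CARD('n) *
        ((MA1 * Xa0 + Mb1) * norm (xstar r1 - xstar r2)
          + (1/2 * Xa0 * Xa0 * MA2 + Xa0 * Mb2) * norm (r1 - r2))"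
      by (rule lipschitz_dQdr) (use r norm_xstar_le in auto)
    also have "\<dots> \<le> real CARD('n) * ((MA1 * Xa0 + Mb1) * (Lxstar * norm (r1 - r2))
      + (1/2 * Xa0 * Xa0 * MA2 + Xa0 * Mb2) * norm (r1 - r2))"
      using lipschitz_xstar[OF r] Xa0 bounds_nonneg by (intro mult_left_mono add_mono) auto
    finally show "norm (dQdr A b r1 (xstar r1) - dQdr A b r2 (xstar r2)) \<le> \<dots>" .
  qed
  also have "\<dots> = Lforce * norm (r1 - r2)" by (simp add: Lforce_def algebra_simps)
  finally show ?thesis .
qed

end


section \<open>The adiabatic energy estimate\<close>

definition (in xlmd_coefficients) "Xa1 = c0 * (Mb1 * R + MA1 * R * Xa0)"
definition (in xlmd_coefficients) "MAt'' = MA2 * R * R + MA1 * R"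
definition (in xlmd_coefficients) "Mbt'' = Mb2 * R * R + Mb1 * R"
definition (in xlmd_coefficients) "Xa2 = c0 * (Mbt'' + MAt'' * Xa0 + 2 * (MA1 * R * Xa1))"
definition (in xlmd_coefficients) "aE = 1 + MA1 * R * c0"
definition (in xlmd_coefficients) "KE = ((R + Xa1)^2 / 2 + Xa2^2 / 2) * exp (aE * tf)"
definition (in xlmd_coefficients) "Ke = sqrt (2 * c0 * KE)"
definition (in xlmd_coefficients) "Ke' = sqrt (2 * KE)"

lemma (in xlmd_coefficients) energy_constants_nonneg:
  "Xa0 \<ge> 0" "Xa1 \<ge> 0" "MAt'' \<ge> 0" "Mbt'' \<ge> 0" "Xa2 \<ge> 0" "aE \<ge> 1" "KE \<ge> 0" "Ke \<ge> 0" "Ke' \<ge> 0"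
  using bounds_nonneg c0 R
  by (auto simp: Xa0_def Xa1_def MAt''_def Mbt''_def Xa2_def aE_def KE_def Ke_def Ke'_def)

locale xlmd_trajectory =
  xlmd_coefficients F A b DA D2A D3A Db D2b D3b DF c0 R tf MA1 MA2 MA3 Mb0 Mb1 Mb2 Mb3 MF1
  for F :: "real^'n \<Rightarrow> real^'n" and A :: "real^'n \<Rightarrow> real^'m^'m"
    and b DA D2A D3A Db D2b D3b DF c0 R tf MA1 MA2 MA3 Mb0 Mb1 Mb2 Mb3 MF1 +
  fixes eps :: real and r p rs ps :: "real \<Rightarrow> real^'n" and x v xs :: "real \<Rightarrow> real^'m"
  assumes eps: "0 < eps"
    and r_deriv: "\<And>t. t \<in> {0..tf} \<Longrightarrow> (r has_vector_derivative p t) (at t within {0..tf})"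
    and p_deriv: "\<And>t. t \<in> {0..tf} \<Longrightarrow>
      (p has_vector_derivative (F (r t) - dQdr A b (r t) (x t))) (at t within {0..tf})"
    and x_deriv: "\<And>t. t \<in> {0..tf} \<Longrightarrow> (x has_vector_derivative v t) (at t within {0..tf})"
    and v_deriv: "\<And>t. t \<in> {0..tf} \<Longrightarrow>
      (v has_vector_derivative ((1/eps) *\<^sub>R (b (r t) - A (r t) *v x t))) (at t within {0..tf})"
    and bounded: "\<And>t. t \<in> {0..tf} \<Longrightarrow>
      norm (r t) \<le> R \<and> norm (p t) \<le> R \<and> norm (F (r t) - dQdr A b (r t) (x t)) \<le> R \<and> norm (x t) \<le> R"
    and init: "x 0 = xstar (rs 0)" "norm (v 0) \<le> R" "r 0 = rs 0" "p 0 = ps 0"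
    and rs_deriv: "\<And>t. t \<in> {0..tf} \<Longrightarrow> (rs has_vector_derivative ps t) (at t within {0..tf})"
    and ps_deriv: "\<And>t. t \<in> {0..tf} \<Longrightarrow>
      (ps has_vector_derivative (F (rs t) - dQdr A b (rs t) (xs t))) (at t within {0..tf})"
    and xs_constraint: "\<And>t. t \<in> {0..tf} \<Longrightarrow> A (rs t) *v xs t = b (rs t)"
    and exact_bounded: "\<And>t. t \<in> {0..tf} \<Longrightarrow> norm (rs t) \<le> R \<and> norm (ps t) \<le> R"
begin

text \<open>\<open>At\<close>, \<open>bt\<close> are \<open>A\<close>, \<open>b\<close> along \<open>r\<close>, primes marking time derivatives. \<open>xa t = xstar (r t)\<close>
  is the adiabatic value of the latent variable, and \<open>xa'\<close>, \<open>xa''\<close> are its time derivatives,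
  each obtained by differentiating \<open>At xa = bt\<close> once more.\<close>

definition "acc t = F (r t) - dQdr A b (r t) (x t)"
definition "vdot t = (1/eps) *\<^sub>R (b (r t) - A (r t) *v x t)"
definition "At t = A (r t)"
definition "At' t = DA (r t) (p t)"
definition "At'' t = D2A (r t) (p t) (p t) + DA (r t) (acc t)"
definition "bt t = b (r t)"
definition "bt' t = Db (r t) (p t)"
definition "bt'' t = D2b (r t) (p t) (p t) + Db (r t) (acc t)"
definition "xa t = matrix_inv (At t) *v bt t"
definition "xa' t = matrix_inv (At t) *v (bt' t - At' t *v xa t)"
definition "xa'' t = matrix_inv (At t) *v (bt'' t - At'' t *v xa t - 2 *\<^sub>R (At' t *v xa' t))"
definition "err t = x t - xa t"

lemma p_deriv_acc: "t \<in> {0..tf} \<Longrightarrow> (p has_vector_derivative acc t) (at t within {0..tf})"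
  using p_deriv by (simp add: acc_def)
definition "err' t = v t - xa' t"
definition "energy t = eps / 2 * (err' t \<bullet> err' t) + 1/2 * (err t \<bullet> (At t *v err t))"

lemma r_bound: "t \<in> {0..tf} \<Longrightarrow> norm (r t) \<le> R" using bounded by blast
lemma p_bound: "t \<in> {0..tf} \<Longrightarrow> norm (p t) \<le> R" using bounded by blast
lemma acc_bound: "t \<in> {0..tf} \<Longrightarrow> norm (acc t) \<le> R" using bounded acc_def by simp
lemma x_bound: "t \<in> {0..tf} \<Longrightarrow> norm (x t) \<le> R" using bounded by blast

lemma At_coercive: "\<forall>s\<in>{0..tf}. \<forall>u. norm u \<le> c0 * norm (At s *v u)"
  unfolding At_def using A_coercive_norm by blast

lemma xa_eq: "At t *v xa t = bt t" unfolding xa_def At_def by (rule A_matrix_inv_right)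
lemma xa'_eq: "At t *v xa' t = bt' t - At' t *v xa t"
  unfolding xa'_def At_def by (rule A_matrix_inv_right)
lemma xa''_eq: "At t *v xa'' t = bt'' t - At'' t *v xa t - 2 *\<^sub>R (At' t *v xa' t)"
  unfolding xa''_def At_def by (rule A_matrix_inv_right)
lemma xa_xstar: "xa t = xstar (r t)" unfolding xa_def xstar_def At_def bt_def ..

lemma At_deriv: "t \<in> {0..tf} \<Longrightarrow> (At has_vector_derivative At' t) (at t within {0..tf})"
  unfolding At_def At'_def by (rule has_vector_derivative_chain[OF A_deriv r_deriv])
lemma bt_deriv: "t \<in> {0..tf} \<Longrightarrow> (bt has_vector_derivative bt' t) (at t within {0..tf})"
  unfolding bt_def bt'_def by (rule has_vector_derivative_chain[OF b_deriv r_deriv])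
lemma DA_r_deriv:
  "t \<in> {0..tf} \<Longrightarrow> ((\<lambda>t. DA (r t)) has_vector_derivative D2A (r t) (p t)) (at t within {0..tf})"
  by (rule has_vector_derivative_chain[OF DA_deriv r_deriv])
lemma Db_r_deriv:
  "t \<in> {0..tf} \<Longrightarrow> ((\<lambda>t. Db (r t)) has_vector_derivative D2b (r t) (p t)) (at t within {0..tf})"
  by (rule has_vector_derivative_chain[OF Db_deriv r_deriv])
lemma At'_deriv: "t \<in> {0..tf} \<Longrightarrow> (At' has_vector_derivative At'' t) (at t within {0..tf})"
  unfolding At'_def At''_def
  using has_vector_derivative_blinfun_apply[OF DA_r_deriv p_deriv_acc] by (simp add: add.commute)
lemma bt'_deriv: "t \<in> {0..tf} \<Longrightarrow> (bt' has_vector_derivative bt'' t) (at t within {0..tf})"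
  unfolding bt'_def bt''_def
  using has_vector_derivative_blinfun_apply[OF Db_r_deriv p_deriv_acc] by (simp add: add.commute)

lemma xa_deriv: assumes t: "t \<in> {0..tf}" shows "(xa has_vector_derivative xa' t) (at t within {0..tf})"
  by (rule has_vector_derivative_linear_solution[OF _ t At_coercive At_deriv[OF t] bt_deriv[OF t]])
    (use xa_eq xa'_eq in auto)

lemma xa'_deriv: assumes t: "t \<in> {0..tf}" shows "(xa' has_vector_derivative xa'' t) (at t within {0..tf})"
proof (rule has_vector_derivative_linear_solution[OF _ t At_coercive At_deriv[OF t]])
  show "\<forall>s\<in>{0..tf}. At s *v xa' s = bt' s - At' s *v xa s" using xa'_eq by blast
  show "((\<lambda>s. bt' s - At' s *v xa s) has_vector_derivative (bt'' t - (At' t *v xa' t + At'' t *v xa t)))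
      (at t within {0..tf})"
    by (intro has_vector_derivative_diff bt'_deriv[OF t] has_vector_derivative_matrix_vector_mult
        At'_deriv[OF t] xa_deriv[OF t])
  show "At t *v xa'' t = bt'' t - (At' t *v xa' t + At'' t *v xa t) - At' t *v xa' t"
    unfolding xa''_eq by (simp add: algebra_simps scaleR_2)
qed

lemma err_deriv: "t \<in> {0..tf} \<Longrightarrow> (err has_vector_derivative err' t) (at t within {0..tf})"
  unfolding err_def err'_def by (intro has_vector_derivative_diff x_deriv xa_deriv)

lemma err'_deriv: "t \<in> {0..tf} \<Longrightarrow> (err' has_vector_derivative (vdot t - xa'' t)) (at t within {0..tf})"
  unfolding err'_def vdot_def by (intro has_vector_derivative_diff v_deriv xa'_deriv)

lemma eps_vdot: "eps *\<^sub>R vdot t = - (At t *v err t)"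
proof -
  have "b (r t) = At t *v xa t" using xa_eq bt_def by simp
  then show ?thesis using eps unfolding vdot_def err_def At_def
    by (simp add: matrix_vector_mult_diff_distrib)
qed

lemma At_inner_commute: "u \<bullet> (At t *v z) = z \<bullet> (At t *v u)"
  unfolding At_def by (rule inner_symmetric_matrix_commute[OF A_symmetric])

lemma energy_deriv: assumes t: "t \<in> {0..tf}"
  shows "(energy has_real_derivative (- eps * (err' t \<bullet> xa'' t) + 1/2 * (err t \<bullet> (At' t *v err t))))
    (at t within {0..tf})"
proof -
  have 1: "((\<lambda>t. err' t \<bullet> err' t) has_real_derivative
      (err' t \<bullet> (vdot t - xa'' t) + (vdot t - xa'' t) \<bullet> err' t)) (at t within {0..tf})"
    by (rule has_real_derivative_inner[OF err'_deriv[OF t] err'_deriv[OF t]])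
  have 2: "((\<lambda>t. err t \<bullet> (At t *v err t)) has_real_derivative
      (err t \<bullet> (At t *v err' t + At' t *v err t) + err' t \<bullet> (At t *v err t))) (at t within {0..tf})"
    by (rule has_real_derivative_inner[OF err_deriv[OF t]
          has_vector_derivative_matrix_vector_mult[OF At_deriv[OF t] err_deriv[OF t]]])
  have 3: "(energy has_real_derivative (eps / 2 * (err' t \<bullet> (vdot t - xa'' t) + (vdot t - xa'' t) \<bullet> err' t)
      + 1/2 * (err t \<bullet> (At t *v err' t + At' t *v err t) + err' t \<bullet> (At t *v err t))))
      (at t within {0..tf})"
    unfolding energy_def[abs_def] by (intro DERIV_add DERIV_cmult 1 2)
  have "err' t \<bullet> (eps *\<^sub>R vdot t) = - (err' t \<bullet> (At t *v err t))" by (simp add: eps_vdot)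
  then have w: "eps * (err' t \<bullet> vdot t) = - (err' t \<bullet> (At t *v err t))" by simp
  have s: "err t \<bullet> (At t *v err' t) = err' t \<bullet> (At t *v err t)" by (rule At_inner_commute)
  show ?thesis using 3
    by (rule DERIV_cong) (simp add: inner_diff_left inner_diff_right inner_add_right
        inner_commute[of "vdot t"] inner_commute[of "xa'' t"] algebra_simps w s)
qed

lemma norm_At': "t \<in> {0..tf} \<Longrightarrow> norm (At' t) \<le> MA1 * R"
  unfolding At'_def using norm_blinfun_apply_bound bound_DA r_bound p_bound by blast
lemma norm_At'': "t \<in> {0..tf} \<Longrightarrow> norm (At'' t) \<le> MAt''"
proof -
  assume t: "t \<in> {0..tf}"
  have "norm (D2A (r t) (p t) (p t)) \<le> MA2 * R * R"
    by (intro norm_blinfun_apply_bound) (use bound_D2A r_bound p_bound t in auto)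
  moreover have "norm (DA (r t) (acc t)) \<le> MA1 * R"
    using norm_blinfun_apply_bound bound_DA r_bound acc_bound t by blast
  ultimately show ?thesis unfolding At''_def MAt''_def by (smt (verit) norm_triangle_ineq)
qed
lemma norm_bt': "t \<in> {0..tf} \<Longrightarrow> norm (bt' t) \<le> Mb1 * R"
  unfolding bt'_def using norm_blinfun_apply_bound bound_Db r_bound p_bound by blast
lemma norm_bt'': "t \<in> {0..tf} \<Longrightarrow> norm (bt'' t) \<le> Mbt''"
proof -
  assume t: "t \<in> {0..tf}"
  have "norm (D2b (r t) (p t) (p t)) \<le> Mb2 * R * R"
    by (intro norm_blinfun_apply_bound) (use bound_D2b r_bound p_bound t in auto)
  moreover have "norm (Db (r t) (acc t)) \<le> Mb1 * R"
    using norm_blinfun_apply_bound bound_Db r_bound acc_bound t by blast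
  ultimately show ?thesis unfolding bt''_def Mbt''_def by (smt (verit) norm_triangle_ineq)
qed

lemma norm_At_inv_le: "norm (matrix_inv (At t) *v z) \<le> c0 * norm z"
  unfolding At_def by (rule norm_A_inv_le)

lemma norm_xa: "t \<in> {0..tf} \<Longrightarrow> norm (xa t) \<le> Xa0"
  unfolding xa_xstar using norm_xstar_le r_bound by blast

lemma norm_xa': assumes t: "t \<in> {0..tf}" shows "norm (xa' t) \<le> Xa1"
proof -
  have "norm (bt' t - At' t *v xa t) \<le> Mb1 * R + MA1 * R * Xa0"
    using norm_bt'[OF t] norm_matrix_vector_mult_bound[OF norm_At'[OF t], of "xa t"] norm_xa[OF t]
      bounds_nonneg R
    by (smt (verit) mult_left_mono norm_triangle_ineq4 mult_nonneg_nonneg)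
  then show ?thesis unfolding xa'_def Xa1_def using norm_At_inv_le c0
    by (meson mult_left_mono order.trans less_imp_le)
qed

lemma norm_xa'': assumes t: "t \<in> {0..tf}" shows "norm (xa'' t) \<le> Xa2"
proof -
  have a: "norm (At'' t *v xa t) \<le> MAt'' * Xa0"
    using norm_matrix_vector_mult_bound[OF norm_At''[OF t], of "xa t"] norm_xa[OF t] energy_constants_nonneg
    by (smt (verit) mult_left_mono)
  have c: "norm (2 *\<^sub>R (At' t *v xa' t)) \<le> 2 * (MA1 * R * Xa1)"
    using norm_matrix_vector_mult_bound[OF norm_At'[OF t], of "xa' t"] norm_xa'[OF t] bounds_nonneg R
    by (simp, smt (verit) mult_left_mono mult_nonneg_nonneg)
  have "norm (bt'' t - At'' t *v xa t - 2 *\<^sub>R (At' t *v xa' t)) \<le> Mbt'' + MAt'' * Xa0 + 2 * (MA1 * R * Xa1)"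
    using norm_bt''[OF t] a c norm_diff_diff_le by (smt (verit))
  then show ?thesis unfolding xa''_def Xa2_def using norm_At_inv_le c0
    by (meson mult_left_mono order.trans less_imp_le)
qed

lemma err_coercive: "(norm (err t))\<^sup>2 \<le> c0 * (err t \<bullet> (At t *v err t))"
  unfolding At_def by (rule A_coercive)
lemma err_quadratic_nonneg: "err t \<bullet> (At t *v err t) \<ge> 0"
proof -
  have "0 \<le> c0 * (err t \<bullet> (At t *v err t))" using err_coercive[of t]
    by (meson order.trans zero_le_power2)
  then show ?thesis using c0 by (simp add: zero_le_mult_iff)
qed

lemma energy_lower_bounds:
  "eps / 2 * (norm (err' t))\<^sup>2 \<le> energy t" "1/2 * (err t \<bullet> (At t *v err t)) \<le> energy t"
  using err_quadratic_nonneg[of t] eps by (auto simp: energy_def power2_norm_eq_inner)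

lemma err_0: "err 0 = 0"
  by (simp add: err_def xa_xstar init(1,3))

lemma zero_in_interval: "0 \<in> {0..tf}" using tf by simp

lemma norm_err'_0: "norm (err' 0) \<le> R + Xa1"
  unfolding err'_def using init(2) norm_xa'[OF zero_in_interval]
  by (smt (verit) norm_triangle_ineq4)

lemma energy_deriv_le: assumes t: "t \<in> {0..tf}"
  shows "- eps * (err' t \<bullet> xa'' t) + 1/2 * (err t \<bullet> (At' t *v err t)) \<le> aE * energy t + eps * Xa2\<^sup>2 / 2"
proof -
  have "- (err' t \<bullet> xa'' t) \<le> norm (err' t) * norm (xa'' t)"
    using Cauchy_Schwarz_ineq2[of "err' t" "xa'' t"] by linarith
  also have "\<dots> \<le> norm (err' t) * Xa2" using norm_xa''[OF t] by (intro mult_left_mono) auto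
  finally have "eps * (- (err' t \<bullet> xa'' t)) \<le> eps * (norm (err' t) * Xa2)" using eps
    by (intro mult_left_mono) auto
  then have "- eps * (err' t \<bullet> xa'' t) \<le> eps * (norm (err' t) * Xa2)" by simp
  also have "\<dots> \<le> eps / 2 * (norm (err' t))\<^sup>2 + eps * Xa2\<^sup>2 / 2"
  proof -
    have "norm (err' t) * Xa2 \<le> ((norm (err' t))\<^sup>2 + Xa2\<^sup>2) / 2"
      using sum_squares_bound[of "norm (err' t)" Xa2] by (simp add: power2_eq_square field_simps) 
    then have "eps * (norm (err' t) * Xa2) \<le> eps * (((norm (err' t))\<^sup>2 + Xa2\<^sup>2) / 2)"
      using eps by (intro mult_left_mono) auto
    also have "\<dots> = eps / 2 * (norm (err' t))\<^sup>2 + eps * Xa2\<^sup>2 / 2" by (simp add: field_simps)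
    finally show ?thesis .
  qed
  finally have 1: "- eps * (err' t \<bullet> xa'' t) \<le> eps / 2 * (norm (err' t))\<^sup>2 + eps * Xa2\<^sup>2 / 2" .
  have "err t \<bullet> (At' t *v err t) \<le> norm (err t) * (MA1 * R * norm (err t))"
    using Cauchy_Schwarz_ineq2[of "err t" "At' t *v err t"]
      norm_matrix_vector_mult_bound[OF norm_At'[OF t], of "err t"]
    by (smt (verit) mult_left_mono norm_ge_zero abs_le_iff)
  also have "\<dots> = MA1 * R * (norm (err t))\<^sup>2" by (simp add: power2_eq_square)
  also have "\<dots> \<le> MA1 * R * (c0 * (err t \<bullet> (At t *v err t)))"
    using err_coercive[of t] bounds_nonneg R by (intro mult_left_mono) auto
  finally have 2: "1/2 * (err t \<bullet> (At' t *v err t)) \<le> MA1 * R * c0 * (1/2 * (err t \<bullet> (At t *v err t)))"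
    by simp
  have 3: "MA1 * R * c0 * (1/2 * (err t \<bullet> (At t *v err t))) \<le> MA1 * R * c0 * energy t"
    using energy_lower_bounds(2)[of t] bounds_nonneg R c0 by (intro mult_left_mono) auto
  have 4: "eps / 2 * (norm (err' t))\<^sup>2 \<le> energy t" by (rule energy_lower_bounds(1))
  show ?thesis using 1 2 3 4 unfolding aE_def by (simp add: algebra_simps)
qed

lemma energy_le: assumes t: "t \<in> {0..tf}" shows "energy t \<le> eps * KE"
proof -
  have "energy t \<le> (energy 0 + eps * Xa2\<^sup>2 / 2 / aE) * exp (aE * t)"
    by (rule gronwall_differential
        [where V'="\<lambda>t. - eps * (err' t \<bullet> xa'' t) + 1/2 * (err t \<bullet> (At' t *v err t))"])
       (use energy_constants_nonneg eps t energy_deriv energy_deriv_le in auto)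
  also have "\<dots> \<le> (eps * ((R + Xa1)^2 / 2) + eps * (Xa2^2 / 2)) * exp (aE * tf)"
  proof (intro mult_mono)
    have "energy 0 = eps / 2 * (norm (err' 0))\<^sup>2"
      by (simp add: energy_def err_0 power2_norm_eq_inner)
    also have "\<dots> \<le> eps / 2 * (R + Xa1)^2"
      using norm_err'_0 eps by (intro mult_left_mono power_mono) auto
    finally have "energy 0 \<le> eps * ((R + Xa1)^2 / 2)" by simp
    moreover have "eps * Xa2\<^sup>2 / 2 / aE \<le> eps * (Xa2^2 / 2)"
    proof -
      have z: "0 \<le> eps * Xa2\<^sup>2 / 2" using eps by simp
      have "eps * Xa2\<^sup>2 / 2 / aE \<le> eps * Xa2\<^sup>2 / 2 / 1" using z energy_constants_nonneg
        by (intro divide_left_mono) auto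
      then show ?thesis by simp
    qed
    ultimately show "energy 0 + eps * Xa2\<^sup>2 / 2 / aE \<le> eps * ((R + Xa1)^2 / 2) + eps * (Xa2^2 / 2)"
      by (simp only: times_divide_eq_right)
    show "exp (aE * t) \<le> exp (aE * tf)" using t energy_constants_nonneg
      by (intro exp_mono mult_left_mono) auto
  qed (use eps in auto)
  also have "\<dots> = eps * KE" by (simp add: KE_def algebra_simps)
  finally show ?thesis .
qed

lemma norm_err_sq_energy: "(norm (err t))\<^sup>2 \<le> 2 * c0 * energy t"
proof -
  have "c0 * (err t \<bullet> (At t *v err t)) \<le> c0 * (2 * energy t)"
    using energy_lower_bounds(2)[of t] c0 by (intro mult_left_mono) auto
  then show ?thesis using err_coercive[of t] by simp
qed

lemma norm_err_le: assumes t: "t \<in> {0..tf}" shows "norm (err t) \<le> Ke * sqrt eps"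
proof -
  have "2 * c0 * energy t \<le> 2 * c0 * (eps * KE)" using energy_le[OF t] c0
    by (intro mult_left_mono) auto
  then have "(norm (err t))\<^sup>2 \<le> 2 * c0 * KE * eps"
    using norm_err_sq_energy[of t] by (simp add: algebra_simps)
  then have "norm (err t) \<le> sqrt (2 * c0 * KE * eps)" by (simp add: real_le_rsqrt)
  then show ?thesis by (simp add: Ke_def real_sqrt_mult)
qed

lemma norm_err_sq_le: assumes t: "t \<in> {0..tf}" shows "(norm (err t))\<^sup>2 \<le> Ke^2 * eps"
  using norm_err_le[OF t] eps energy_constants_nonneg
  by (smt (verit) norm_ge_zero power_mono power_mult_distrib real_sqrt_pow2)

lemma norm_err'_le: assumes t: "t \<in> {0..tf}" shows "norm (err' t) \<le> Ke'"
proof -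
  have "eps / 2 * (norm (err' t))\<^sup>2 \<le> eps * KE" using energy_lower_bounds(1)[of t] energy_le[OF t]
    by linarith
  then have "(norm (err' t))\<^sup>2 \<le> 2 * KE" using eps by (simp add: field_simps)
  then show ?thesis by (simp add: Ke'_def real_le_rsqrt)
qed

end


section \<open>Nuclear error of order \<open>\<epsilon>\<close>\<close>

definition (in xlmd_coefficients) "Llq = MA1 * Xa0 + Mb1"
definition (in xlmd_coefficients) "Mmq = c0 * Llq"
definition (in xlmd_coefficients) "Llq' = MA2 * R * Xa0 + MA1 * Xa1 + Mb2 * R"
definition (in xlmd_coefficients) "Mmq' = c0 * (Llq' + MA1 * R * Mmq)"
definition (in xlmd_coefficients) "Kcorr = real CARD('n) * (Mmq * Ke')"
definition (in xlmd_coefficients) "Krem = real CARD('n) * (1/2 * MA1 * Ke^2 + Mmq' * Ke' + Mmq * Xa2)"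
definition (in xlmd_coefficients) "aV = 2 + Lforce"
definition (in xlmd_coefficients) "KV = (Kcorr^2 + (Kcorr^2 + Krem^2)) * exp (aV * tf)"
definition (in xlmd_coefficients) "Krp = sqrt KV + Kcorr"

lemma (in xlmd_coefficients) correction_constants_nonneg:
  "Llq \<ge> 0" "Mmq \<ge> 0" "Llq' \<ge> 0" "Mmq' \<ge> 0" "Kcorr \<ge> 0" "Krem \<ge> 0" "Lforce \<ge> 0" "aV \<ge> 1"
  "KV \<ge> 0" "Krp \<ge> 0" "Lxstar \<ge> 0"
proof -
  show L: "Llq \<ge> 0" "Mmq \<ge> 0" "Llq' \<ge> 0" "Mmq' \<ge> 0" "Kcorr \<ge> 0" "Krem \<ge> 0" "Lxstar \<ge> 0"
    using bounds_nonneg c0 R energy_constants_nonneg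
    by (auto simp: Llq_def Mmq_def Llq'_def Mmq'_def Kcorr_def Krem_def Lxstar_def)
  show "Lforce \<ge> 0" using bounds_nonneg energy_constants_nonneg L by (auto simp: Lforce_def)
  then show "aV \<ge> 1" "KV \<ge> 0" "Krp \<ge> 0" using L by (auto simp: aV_def KV_def Krp_def)
qed

context xlmd_trajectory
begin

text \<open>\<open>lq k t\<close> is the gradient in \<open>x\<close> of the \<open>k\<close>-th component of \<open>dQdr\<close> at \<open>(r t, xa t)\<close>.
  By symmetry of \<open>At\<close>, \<open>lq k t \<bullet> err t = - \<epsilon> mq k t \<bullet> v'\<close>, so the part of the force error that is
  linear in \<open>err\<close> equals \<open>\<epsilon>\<close> times the time derivative of \<open>corr\<close> up to \<open>O(\<epsilon>)\<close>. Subtracting \<open>\<epsilon> corr\<close>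
  from the momentum error leaves a quantity \<open>pmod\<close> whose derivative is Lipschitz in \<open>r - rs\<close>
  up to \<open>O(\<epsilon>)\<close>.\<close>

definition "lq k t = DA (r t) (axis k 1) *v xa t - Db (r t) (axis k 1)"
definition "lq' k t =
  D2A (r t) (p t) (axis k 1) *v xa t + DA (r t) (axis k 1) *v xa' t - D2b (r t) (p t) (axis k 1)"
definition "mq k t = matrix_inv (At t) *v lq k t"
definition "mq' k t = matrix_inv (At t) *v (lq' k t - At' t *v mq k t)"
definition "corr t = (\<chi> k. mq k t \<bullet> err' t)"
definition "corr' t = (\<chi> k. mq k t \<bullet> (vdot t - xa'' t) + mq' k t \<bullet> err' t)"
definition "accs t = F (rs t) - dQdr A b (rs t) (xs t)"
definition "pmod t = (p t - ps t) - eps *\<^sub>R corr t"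
definition "lyap t = (r t - rs t) \<bullet> (r t - rs t) + pmod t \<bullet> pmod t"

lemma mq_eq: "At t *v mq k t = lq k t" unfolding mq_def At_def by (rule A_matrix_inv_right)
lemma mq'_eq: "At t *v mq' k t = lq' k t - At' t *v mq k t"
  unfolding mq'_def At_def by (rule A_matrix_inv_right)

lemma DA_axis_deriv:
  "t \<in> {0..tf} \<Longrightarrow>
    ((\<lambda>t. DA (r t) (axis k 1)) has_vector_derivative D2A (r t) (p t) (axis k 1)) (at t within {0..tf})"
  using has_vector_derivative_blinfun_apply[OF DA_r_deriv has_vector_derivative_const[of "axis k 1"]]
  by simp

lemma Db_axis_deriv:
  "t \<in> {0..tf} \<Longrightarrow>
    ((\<lambda>t. Db (r t) (axis k 1)) has_vector_derivative D2b (r t) (p t) (axis k 1)) (at t within {0..tf})"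
  using has_vector_derivative_blinfun_apply[OF Db_r_deriv has_vector_derivative_const[of "axis k 1"]]
  by simp

lemma lq_deriv: "t \<in> {0..tf} \<Longrightarrow> (lq k has_vector_derivative lq' k t) (at t within {0..tf})"
  using has_vector_derivative_diff[OF has_vector_derivative_matrix_vector_mult[OF DA_axis_deriv xa_deriv]
      Db_axis_deriv]
  unfolding lq_def[abs_def] lq'_def by (simp add: add.commute)

lemma mq_deriv: assumes t: "t \<in> {0..tf}" shows "(mq k has_vector_derivative mq' k t) (at t within {0..tf})"
  by (rule has_vector_derivative_linear_solution[OF _ t At_coercive At_deriv[OF t] lq_deriv[OF t]])
    (use mq_eq mq'_eq in auto)

lemma corr_deriv:
  assumes t: "t \<in> {0..tf}"
  shows "(corr has_vector_derivative corr' t) (at t within {0..tf})"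
  unfolding corr_def[abs_def] corr'_def
  by (rule has_vector_derivative_vec_lambda,
      rule has_real_derivative_inner[OF mq_deriv[OF t] err'_deriv[OF t]])

lemma xs_xstar: "t \<in> {0..tf} \<Longrightarrow> xs t = xstar (rs t)"
  unfolding xstar_def by (rule A_solve_unique[OF xs_constraint])

lemma accs_exact_force: "t \<in> {0..tf} \<Longrightarrow> accs t = exact_force (rs t)"
  unfolding accs_def exact_force_def using xs_xstar by simp

lemma dQdr_expansion:
  "dQdr A b (r t) (x t) $ k
    = dQdr A b (r t) (xa t) $ k + lq k t \<bullet> err t + 1/2 * (err t \<bullet> (DA (r t) (axis k 1) *v err t))"
proof -
  have x: "x t = xa t + err t" by (simp add: err_def)
  have "xa t \<bullet> (DA (r t) (axis k 1) *v err t) = err t \<bullet> (DA (r t) (axis k 1) *v xa t)"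
    by (rule inner_symmetric_matrix_commute[OF DA_symmetric])
  then show ?thesis unfolding x
    by (simp add: dQdr_component lq_def inner_add_left inner_add_right inner_diff_left
        matrix_vector_right_distrib algebra_simps inner_commute[of "err t"])
qed

lemma eps_mq_vdot: "eps * (mq k t \<bullet> vdot t) = - (lq k t \<bullet> err t)"
proof -
  have "eps * (mq k t \<bullet> vdot t) = mq k t \<bullet> (eps *\<^sub>R vdot t)" by simp
  also have "\<dots> = - (mq k t \<bullet> (At t *v err t))" by (simp add: eps_vdot)
  also have "mq k t \<bullet> (At t *v err t) = err t \<bullet> (At t *v mq k t)" by (rule At_inner_commute)
  finally show ?thesis by (simp add: mq_eq inner_commute)
qed

definition "rem t = (\<chi> k. - 1/2 * (err t \<bullet> (DA (r t) (axis k 1) *v err t))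
  - eps * (mq' k t \<bullet> err' t) + eps * (mq k t \<bullet> xa'' t))"

lemma force_error_decomposition:
  assumes t: "t \<in> {0..tf}"
  shows "acc t - accs t - eps *\<^sub>R corr' t = (exact_force (r t) - exact_force (rs t)) + rem t"
proof -
  have "acc t - accs t
      = (exact_force (r t) - exact_force (rs t)) - (dQdr A b (r t) (x t) - dQdr A b (r t) (xa t))"
    using accs_exact_force[OF t] by (simp add: acc_def exact_force_def xa_xstar)
  then show ?thesis
    by (simp add: vec_eq_iff dQdr_expansion corr'_def rem_def inner_diff_right algebra_simps eps_mq_vdot)
qed

lemma norm_lq: assumes t: "t \<in> {0..tf}" shows "norm (lq k t) \<le> Llq"
proof -
  have "norm (DA (r t) (axis k 1)) \<le> MA1"
    using norm_blinfun_axis_le bound_DA r_bound[OF t] order.trans by blast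
  then have 1: "norm (DA (r t) (axis k 1) *v xa t) \<le> MA1 * Xa0"
    using norm_matrix_vector_mult_bound norm_xa[OF t] bounds_nonneg
    by (meson mult_left_mono order.trans)
  have 2: "norm (Db (r t) (axis k 1)) \<le> Mb1"
    using norm_blinfun_axis_le bound_Db r_bound[OF t] order.trans by blast
  show ?thesis unfolding lq_def Llq_def using 1 2 norm_triangle_ineq4 by (smt (verit))
qed

lemma norm_mq: "t \<in> {0..tf} \<Longrightarrow> norm (mq k t) \<le> Mmq"
  unfolding mq_def Mmq_def using norm_At_inv_le norm_lq c0
  by (meson mult_left_mono order.trans less_imp_le)

lemma norm_lq': assumes t: "t \<in> {0..tf}" shows "norm (lq' k t) \<le> Llq'"
proof -
  have "norm (D2A (r t) (p t) (axis k 1)) \<le> MA2 * R * 1"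
    by (intro norm_blinfun_apply_bound) (use bound_D2A r_bound p_bound t in auto)
  then have 1: "norm (D2A (r t) (p t) (axis k 1) *v xa t) \<le> MA2 * R * Xa0"
    using norm_matrix_vector_mult_bound norm_xa[OF t] bounds_nonneg R
    by (smt (verit) mult_left_mono mult_nonneg_nonneg)
  have "norm (DA (r t) (axis k 1)) \<le> MA1"
    using norm_blinfun_axis_le bound_DA r_bound[OF t] order.trans by blast
  then have 2: "norm (DA (r t) (axis k 1) *v xa' t) \<le> MA1 * Xa1"
    using norm_matrix_vector_mult_bound norm_xa'[OF t] bounds_nonneg
    by (meson mult_left_mono order.trans)
  have 3: "norm (D2b (r t) (p t) (axis k 1)) \<le> Mb2 * R * 1"
    by (intro norm_blinfun_apply_bound) (use bound_D2b r_bound p_bound t in auto)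
  show ?thesis unfolding lq'_def Llq'_def using 1 2 3 norm_triangle_ineq4 norm_triangle_ineq
    by (smt (verit))
qed

lemma norm_mq': assumes t: "t \<in> {0..tf}" shows "norm (mq' k t) \<le> Mmq'"
proof -
  have "norm (At' t *v mq k t) \<le> MA1 * R * Mmq"
    using norm_matrix_vector_mult_bound[OF norm_At'[OF t]] norm_mq[OF t] bounds_nonneg R
    by (smt (verit) mult_left_mono mult_nonneg_nonneg)
  then have "norm (lq' k t - At' t *v mq k t) \<le> Llq' + MA1 * R * Mmq"
    using norm_lq'[OF t, of k] norm_triangle_ineq4 by (smt (verit))
  then show ?thesis unfolding mq'_def Mmq'_def using norm_At_inv_le c0
    by (meson mult_left_mono order.trans less_imp_le)
qed

lemma norm_corr: assumes t: "t \<in> {0..tf}" shows "norm (corr t) \<le> Kcorr"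
  unfolding corr_def Kcorr_def
proof (rule norm_vec_lambda_le)
  fix k
  have "\<bar>mq k t \<bullet> err' t\<bar> \<le> norm (mq k t) * norm (err' t)" by (rule Cauchy_Schwarz_ineq2)
  also have "\<dots> \<le> Mmq * Ke'" using norm_mq[OF t] norm_err'_le[OF t] correction_constants_nonneg
    by (intro mult_mono) auto
  finally show "\<bar>mq k t \<bullet> err' t\<bar> \<le> Mmq * Ke'" .
qed

lemma norm_rem: assumes t: "t \<in> {0..tf}" shows "norm (rem t) \<le> Krem * eps"
proof -
  have "norm (rem t) \<le> real CARD('n) * (1/2 * MA1 * Ke^2 * eps + eps * (Mmq' * Ke') + eps * (Mmq * Xa2))"
    unfolding rem_def
  proof (rule norm_vec_lambda_le)
    fix k
    have "norm (DA (r t) (axis k 1)) \<le> MA1"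
      using norm_blinfun_axis_le bound_DA r_bound[OF t] order.trans by blast
    then have "\<bar>err t \<bullet> (DA (r t) (axis k 1) *v err t)\<bar> \<le> norm (err t) * (MA1 * norm (err t))"
      using Cauchy_Schwarz_ineq2[of "err t" "DA (r t) (axis k 1) *v err t"] norm_matrix_vector_mult_bound
      by (meson mult_left_mono norm_ge_zero order.trans)
    also have "\<dots> = MA1 * (norm (err t))\<^sup>2" by (simp add: power2_eq_square)
    also have "\<dots> \<le> MA1 * (Ke^2 * eps)" using norm_err_sq_le[OF t] bounds_nonneg
      by (intro mult_left_mono) auto
    finally have 1: "\<bar>1/2 * (err t \<bullet> (DA (r t) (axis k 1) *v err t))\<bar> \<le> 1/2 * MA1 * Ke^2 * eps"
      by simp
    have "\<bar>mq' k t \<bullet> err' t\<bar> \<le> Mmq' * Ke'"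
      using Cauchy_Schwarz_ineq2[of "mq' k t" "err' t"] norm_mq'[OF t] norm_err'_le[OF t]
        correction_constants_nonneg
      by (meson mult_mono norm_ge_zero order.trans)
    then have 2: "\<bar>eps * (mq' k t \<bullet> err' t)\<bar> \<le> eps * (Mmq' * Ke')" using eps
      by (simp add: abs_mult mult_left_mono)
    have "\<bar>mq k t \<bullet> xa'' t\<bar> \<le> Mmq * Xa2"
      using Cauchy_Schwarz_ineq2[of "mq k t" "xa'' t"] norm_mq[OF t] norm_xa''[OF t]
        correction_constants_nonneg
      by (meson mult_mono norm_ge_zero order.trans)
    then have 3: "\<bar>eps * (mq k t \<bullet> xa'' t)\<bar> \<le> eps * (Mmq * Xa2)" using eps
      by (simp add: abs_mult mult_left_mono)
    show "\<bar>- 1/2 * (err t \<bullet> (DA (r t) (axis k 1) *v err t)) - eps * (mq' k t \<bullet> err' t)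
      + eps * (mq k t \<bullet> xa'' t)\<bar>
      \<le> 1/2 * MA1 * Ke^2 * eps + eps * (Mmq' * Ke') + eps * (Mmq * Xa2)"
      using 1 2 3 by linarith
  qed
  also have "\<dots> = Krem * eps" by (simp add: Krem_def algebra_simps)
  finally show ?thesis .
qed

lemma norm_pmod_deriv: assumes t: "t \<in> {0..tf}"
  shows "norm (acc t - accs t - eps *\<^sub>R corr' t) \<le> Lforce * norm (r t - rs t) + Krem * eps"
  unfolding force_error_decomposition[OF t]
  using lipschitz_exact_force[OF r_bound[OF t]] exact_bounded[OF t] norm_rem[OF t]
  by (smt (verit) norm_triangle_ineq)

lemma pmod_deriv:
  assumes t: "t \<in> {0..tf}"
  shows "(pmod has_vector_derivative (acc t - accs t - eps *\<^sub>R corr' t)) (at t within {0..tf})"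
  unfolding pmod_def[abs_def]
  using has_vector_derivative_diff[OF has_vector_derivative_diff[OF p_deriv[OF t] ps_deriv[OF t]]
      has_vector_derivative_scaleR[OF DERIV_const corr_deriv[OF t]]]
  by (simp add: acc_def accs_def)

lemma lyap_deriv: assumes t: "t \<in> {0..tf}"
  shows "(lyap has_real_derivative
      (2 * ((r t - rs t) \<bullet> (p t - ps t)) + 2 * (pmod t \<bullet> (acc t - accs t - eps *\<^sub>R corr' t))))
    (at t within {0..tf})"
proof -
  have dd: "((\<lambda>t. r t - rs t) has_vector_derivative (p t - ps t)) (at t within {0..tf})"
    by (intro has_vector_derivative_diff r_deriv rs_deriv t)
  show ?thesis unfolding lyap_def[abs_def]
    using DERIV_add[OF has_real_derivative_inner[OF dd dd]
        has_real_derivative_inner[OF pmod_deriv[OF t] pmod_deriv[OF t]]]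
    by (rule DERIV_cong) (simp add: inner_commute)
qed

lemma lyap_deriv_le: assumes t: "t \<in> {0..tf}"
  shows "2 * ((r t - rs t) \<bullet> (p t - ps t)) + 2 * (pmod t \<bullet> (acc t - accs t - eps *\<^sub>R corr' t))
    \<le> aV * lyap t + (Kcorr^2 + Krem^2) * eps^2"
proof -
  define nr where "nr = norm (r t - rs t)"
  define nP where "nP = norm (pmod t)"
  have pp: "p t - ps t = pmod t + eps *\<^sub>R corr t" by (simp add: pmod_def)
  have lyap: "lyap t = nr^2 + nP^2" by (simp add: lyap_def nr_def nP_def power2_norm_eq_inner)
  have 1: "(r t - rs t) \<bullet> (p t - ps t) \<le> nr * nP + nr * (eps * Kcorr)"
  proof -
    have "(r t - rs t) \<bullet> (p t - ps t) = (r t - rs t) \<bullet> pmod t + eps * ((r t - rs t) \<bullet> corr t)"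
      by (simp add: pp inner_add_right)
    also have "\<dots> \<le> nr * nP + eps * (nr * Kcorr)"
    proof (intro add_mono mult_left_mono)
      show "(r t - rs t) \<bullet> pmod t \<le> nr * nP" unfolding nr_def nP_def by (rule norm_cauchy_schwarz)
      have "(r t - rs t) \<bullet> corr t \<le> nr * norm (corr t)" unfolding nr_def
        by (rule norm_cauchy_schwarz)
      also have "\<dots> \<le> nr * Kcorr" using norm_corr[OF t] by (intro mult_left_mono) (auto simp: nr_def)
      finally show "(r t - rs t) \<bullet> corr t \<le> nr * Kcorr" .
    qed (use eps in auto)
    finally show ?thesis by (simp add: algebra_simps)
  qed
  have 2: "pmod t \<bullet> (acc t - accs t - eps *\<^sub>R corr' t) \<le> nP * (Lforce * nr + Krem * eps)"
    using norm_cauchy_schwarz[of "pmod t" "acc t - accs t - eps *\<^sub>R corr' t"] norm_pmod_deriv[OF t]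
    by (smt (verit, best) mult_left_mono norm_ge_zero nP_def nr_def)
  have s1: "2 * nr * nP \<le> nr^2 + nP^2" by (rule sum_squares_bound)
  have s2: "2 * nr * (eps * Kcorr) \<le> nr^2 + (eps * Kcorr)^2" by (rule sum_squares_bound)
  have s3: "2 * nP * nr \<le> nP^2 + nr^2" by (rule sum_squares_bound)
  have s4: "2 * nP * (Krem * eps) \<le> nP^2 + (Krem * eps)^2" by (rule sum_squares_bound)
  have Lforce: "Lforce \<ge> 0" by (rule correction_constants_nonneg)
  have s3': "Lforce * (2 * nP * nr) \<le> Lforce * (nP^2 + nr^2)" using s3 Lforce
    by (rule mult_left_mono)
  show ?thesis unfolding lyap aV_def
    using 1 2 s1 s2 s3' s4 by (simp add: algebra_simps power_mult_distrib) 
qed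

lemma lyap_le: assumes t: "t \<in> {0..tf}" shows "lyap t \<le> KV * eps^2"
proof -
  have "lyap t \<le> (lyap 0 + (Kcorr^2 + Krem^2) * eps^2 / aV) * exp (aV * t)"
    by (rule gronwall_differential[where V'="\<lambda>t. 2 * ((r t - rs t) \<bullet> (p t - ps t))
        + 2 * (pmod t \<bullet> (acc t - accs t - eps *\<^sub>R corr' t))"])
       (use correction_constants_nonneg eps t lyap_deriv lyap_deriv_le in auto)
  also have "\<dots> \<le> (eps^2 * Kcorr^2 + eps^2 * (Kcorr^2 + Krem^2)) * exp (aV * tf)"
  proof (intro mult_mono)
    have "lyap 0 = eps^2 * (norm (corr 0))^2"
      by (simp add: lyap_def pmod_def init power2_norm_eq_inner power_mult_distrib power2_eq_square
          flip: power2_norm_eq_inner)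
    also have "\<dots> \<le> eps^2 * Kcorr^2"
      using norm_corr[OF zero_in_interval] by (intro mult_left_mono power_mono) auto
    finally have a: "lyap 0 \<le> eps^2 * Kcorr^2" .
    have z: "0 \<le> (Kcorr^2 + Krem^2) * eps^2" by simp
    have "(Kcorr^2 + Krem^2) * eps^2 / aV \<le> (Kcorr^2 + Krem^2) * eps^2 / 1"
      using z correction_constants_nonneg by (intro divide_left_mono) auto
    then show "lyap 0 + (Kcorr^2 + Krem^2) * eps^2 / aV \<le> eps^2 * Kcorr^2 + eps^2 * (Kcorr^2 + Krem^2)"
      using a by (simp add: algebra_simps)
    show "exp (aV * t) \<le> exp (aV * tf)" using t correction_constants_nonneg
      by (intro exp_mono mult_left_mono) auto
  qed (use eps in auto)
  also have "\<dots> = KV * eps^2" by (simp add: KV_def algebra_simps)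
  finally show ?thesis .
qed


lemma r_err_pmod_le:
  assumes t: "t \<in> {0..tf}"
  shows "norm (r t - rs t) \<le> sqrt KV * eps" "norm (pmod t) \<le> sqrt KV * eps"
proof -
  have "(norm (r t - rs t))\<^sup>2 + (norm (pmod t))\<^sup>2 \<le> (sqrt KV * eps)\<^sup>2"
    using lyap_le[OF t] correction_constants_nonneg
    by (simp add: lyap_def power2_norm_eq_inner power_mult_distrib)
  then have "(norm (r t - rs t))\<^sup>2 \<le> (sqrt KV * eps)\<^sup>2" "(norm (pmod t))\<^sup>2 \<le> (sqrt KV * eps)\<^sup>2"
    using zero_le_power2[of "norm (r t - rs t)"] zero_le_power2[of "norm (pmod t)"] by linarith+
  moreover have "0 \<le> sqrt KV * eps" using eps correction_constants_nonneg by simp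
  ultimately show "norm (r t - rs t) \<le> sqrt KV * eps" "norm (pmod t) \<le> sqrt KV * eps"
    by (meson power2_le_imp_le)+
qed

lemma r_err: "t \<in> {0..tf} \<Longrightarrow> norm (r t - rs t) \<le> Krp * eps"
  using r_err_pmod_le(1)[of t] correction_constants_nonneg eps
  by (simp add: Krp_def distrib_right add_increasing2)

lemma p_err:
  assumes t: "t \<in> {0..tf}"
  shows "norm (p t - ps t) \<le> Krp * eps"
proof -
  have "norm (p t - ps t) \<le> norm (pmod t) + eps * norm (corr t)"
    unfolding pmod_def using eps norm_triangle_ineq[of "pmod t" "eps *\<^sub>R corr t"]
    by (simp add: pmod_def)
  also have "\<dots> \<le> sqrt KV * eps + eps * Kcorr"
    using r_err_pmod_le(2)[OF t] norm_corr[OF t] eps by (smt (verit) mult_left_mono)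
  finally show ?thesis by (simp add: Krp_def algebra_simps)
qed

end


section \<open>Optimally compatible initial velocity\<close>

definition (in xlmd_coefficients) "Kv = Ke' + Xa1"
definition (in xlmd_coefficients)
  "Kacc' = MF1 * R
    + real CARD('n) * (1/2 * (R * (MA1 * Kv + MA2 * R * R) + Kv * (MA1 * R)) + (Mb1 * Kv + Mb2 * R * R))"
definition (in xlmd_coefficients)
  "MAt''' = MA2 * R * R + (MA2 * R * R + MA3 * R * R * R) + (MA1 * Kacc' + MA2 * R * R)"
definition (in xlmd_coefficients)
  "Mbt''' = Mb2 * R * R + (Mb2 * R * R + Mb3 * R * R * R) + (Mb1 * Kacc' + Mb2 * R * R)"
definition (in xlmd_coefficients)
  "Xa3 = c0 * (Mbt''' + MAt''' * Xa0 + 3 * (MAt'' * Xa1) + 3 * (MA1 * R * Xa2))"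
definition (in xlmd_coefficients) "aW = 2 * c0 * (MA1 * R + 1)"
definition (in xlmd_coefficients) "KW = (c0 * Xa2^2 + Xa3^2 / 2 / aW) * exp (aW * tf)"
definition (in xlmd_coefficients) "Ke2 = sqrt (4 * c0 * KW)"

lemma (in xlmd_coefficients) optimal_constants_nonneg:
  "Kv \<ge> 0" "Kacc' \<ge> 0" "MAt''' \<ge> 0" "Mbt''' \<ge> 0" "Xa3 \<ge> 0" "aW > 0" "KW \<ge> 0" "Ke2 \<ge> 0"
proof -
  show Kv: "Kv \<ge> 0" using energy_constants_nonneg by (simp add: Kv_def)
  show Kacc': "Kacc' \<ge> 0" using Kv bounds_nonneg R by (simp add: Kacc'_def)
  show M: "MAt''' \<ge> 0" "Mbt''' \<ge> 0"
    using Kacc' bounds_nonneg R by (simp_all add: MAt'''_def Mbt'''_def)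
  show "Xa3 \<ge> 0"
    using M c0 energy_constants_nonneg bounds_nonneg R by (simp add: Xa3_def MAt''_def)
  show "aW > 0" using c0 bounds_nonneg R by (simp add: aW_def add_nonneg_pos)
  then show "KW \<ge> 0" using c0 by (simp add: KW_def)
  then show "Ke2 \<ge> 0" using c0 by (simp add: Ke2_def)
qed

context xlmd_trajectory
begin

definition "dQdr_rate k t = 1/2 * (x t \<bullet> (DA (r t) (axis k 1) *v v t + D2A (r t) (p t) (axis k 1) *v x t)
  + v t \<bullet> (DA (r t) (axis k 1) *v x t)) - (Db (r t) (axis k 1) \<bullet> v t + D2b (r t) (p t) (axis k 1) \<bullet> x t)"

definition "acc' t = DF (r t) (p t) - (\<chi> k. dQdr_rate k t)"

lemma acc_deriv:
  assumes t: "t \<in> {0..tf}"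
  shows "(acc has_vector_derivative acc' t) (at t within {0..tf})"
proof -
  have acc: "acc s
      = F (r s) - (\<chi> k. 1/2 * (x s \<bullet> (DA (r s) (axis k 1) *v x s)) - Db (r s) (axis k 1) \<bullet> x s)" for s
    by (simp add: acc_def vec_eq_iff dQdr_component)
  have "((\<lambda>s. \<chi> k. 1/2 * (x s \<bullet> (DA (r s) (axis k 1) *v x s)) - Db (r s) (axis k 1) \<bullet> x s)
      has_vector_derivative (\<chi> k. dQdr_rate k t)) (at t within {0..tf})"
    unfolding dQdr_rate_def
    by (intro has_vector_derivative_vec_lambda DERIV_diff DERIV_cmult has_real_derivative_inner
        has_vector_derivative_matrix_vector_mult x_deriv DA_axis_deriv Db_axis_deriv t)
  then show ?thesis unfolding acc[abs_def] acc'_def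
    by (intro has_vector_derivative_diff has_vector_derivative_chain[OF F_deriv r_deriv[OF t]])
qed

lemma norm_v: assumes t: "t \<in> {0..tf}" shows "norm (v t) \<le> Kv"
proof -
  have "v t = err' t + xa' t" by (simp add: err'_def)
  then have "norm (v t) \<le> norm (err' t) + norm (xa' t)" by (metis norm_triangle_ineq)
  then show ?thesis unfolding Kv_def using norm_err'_le[OF t] norm_xa'[OF t] by linarith
qed

lemma abs_dQdr_rate_le:
  assumes t: "t \<in> {0..tf}"
  shows "\<bar>dQdr_rate k t\<bar> \<le> 1/2 * (R * (MA1 * Kv + MA2 * R * R) + Kv * (MA1 * R)) + (Mb1 * Kv + Mb2 * R * R)"
proof -
  have rr: "norm (r t) \<le> R" "norm (p t) \<le> R" "norm (x t) \<le> R" "norm (v t) \<le> Kv"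
    using r_bound p_bound x_bound norm_v t by auto
  have M: "norm (DA (r t) (axis k 1)) \<le> MA1"
    using norm_blinfun_axis_le bound_DA rr order.trans by blast
  have M': "norm (D2A (r t) (p t) (axis k 1)) \<le> MA2 * R * 1"
    by (intro norm_blinfun_apply_bound) (use bound_D2A rr in auto)
  have B: "norm (Db (r t) (axis k 1)) \<le> Mb1"
    using norm_blinfun_axis_le bound_Db rr order.trans by blast
  have B': "norm (D2b (r t) (p t) (axis k 1)) \<le> Mb2 * R * 1"
    by (intro norm_blinfun_apply_bound) (use bound_D2b rr in auto)
  have a1: "norm (DA (r t) (axis k 1) *v v t) \<le> MA1 * Kv"
    using norm_matrix_vector_mult_bound[OF M] rr bounds_nonneg by (meson mult_left_mono order.trans)
  have a2: "norm (D2A (r t) (p t) (axis k 1) *v x t) \<le> MA2 * R * R"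
    using norm_matrix_vector_mult_bound[OF M', of "x t"] rr bounds_nonneg R
    by (smt (verit) mult_left_mono mult_nonneg_nonneg)
  have a3: "norm (DA (r t) (axis k 1) *v x t) \<le> MA1 * R"
    using norm_matrix_vector_mult_bound[OF M] rr bounds_nonneg by (meson mult_left_mono order.trans)
  have "\<bar>x t \<bullet> (DA (r t) (axis k 1) *v v t + D2A (r t) (p t) (axis k 1) *v x t)\<bar>
      \<le> R * (MA1 * Kv + MA2 * R * R)"
    using Cauchy_Schwarz_ineq2[of "x t"] a1 a2 rr
      norm_triangle_ineq[of "DA (r t) (axis k 1) *v v t" "D2A (r t) (p t) (axis k 1) *v x t"]
    by (smt (verit) mult_mono norm_ge_zero)
  moreover have "\<bar>v t \<bullet> (DA (r t) (axis k 1) *v x t)\<bar> \<le> Kv * (MA1 * R)"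
    using Cauchy_Schwarz_ineq2[of "v t"] a3 rr by (smt (verit) mult_mono norm_ge_zero)
  moreover have "\<bar>Db (r t) (axis k 1) \<bullet> v t\<bar> \<le> Mb1 * Kv"
    using Cauchy_Schwarz_ineq2[of "Db (r t) (axis k 1)" "v t"] B rr
    by (smt (verit) mult_mono norm_ge_zero)
  moreover have "\<bar>D2b (r t) (p t) (axis k 1) \<bullet> x t\<bar> \<le> Mb2 * R * R"
    using Cauchy_Schwarz_ineq2[of "D2b (r t) (p t) (axis k 1)" "x t"] B' rr
    by (smt (verit) mult_mono norm_ge_zero)
  ultimately show ?thesis unfolding dQdr_rate_def by (rule abs_half_sum_diff_le)
qed

lemma norm_acc': assumes t: "t \<in> {0..tf}" shows "norm (acc' t) \<le> Kacc'"
proof -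
  have "norm (DF (r t) (p t)) \<le> MF1 * R"
    using norm_blinfun_apply_bound bound_DF r_bound p_bound t by blast
  moreover have "norm (\<chi> k. dQdr_rate k t) \<le> real CARD('n) *
      (1/2 * (R * (MA1 * Kv + MA2 * R * R) + Kv * (MA1 * R)) + (Mb1 * Kv + Mb2 * R * R))"
    by (rule norm_vec_lambda_le[OF abs_dQdr_rate_le[OF t]])
  ultimately show ?thesis unfolding acc'_def Kacc'_def using norm_triangle_ineq4 by (smt (verit))
qed

definition "At''' t = (D2A (r t) (p t) (acc t) + (D2A (r t) (acc t) + D3A (r t) (p t) (p t)) (p t))
  + (DA (r t) (acc' t) + D2A (r t) (p t) (acc t))"
definition "bt''' t = (D2b (r t) (p t) (acc t) + (D2b (r t) (acc t) + D3b (r t) (p t) (p t)) (p t))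
  + (Db (r t) (acc' t) + D2b (r t) (p t) (acc t))"
definition "xa''' t = matrix_inv (At t) *v
  (bt''' t - At''' t *v xa t - 3 *\<^sub>R (At'' t *v xa' t) - 3 *\<^sub>R (At' t *v xa'' t))"

lemma At''_deriv:
  assumes t: "t \<in> {0..tf}"
  shows "(At'' has_vector_derivative At''' t) (at t within {0..tf})"
proof -
  have "((\<lambda>t. D2A (r t)) has_vector_derivative D3A (r t) (p t)) (at t within {0..tf})"
    by (rule has_vector_derivative_chain[OF D2A_deriv r_deriv[OF t]])
  then have "((\<lambda>t. D2A (r t) (p t)) has_vector_derivative (D2A (r t) (acc t) + D3A (r t) (p t) (p t)))
      (at t within {0..tf})"
    by (rule has_vector_derivative_blinfun_apply[OF _ p_deriv_acc[OF t]])
  from has_vector_derivative_blinfun_apply[OF this p_deriv_acc[OF t]]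
    has_vector_derivative_blinfun_apply[OF DA_r_deriv[OF t] acc_deriv[OF t]]
  show ?thesis unfolding At''_def[abs_def] At'''_def
    by (rule has_vector_derivative_add)
qed

lemma bt''_deriv:
  assumes t: "t \<in> {0..tf}"
  shows "(bt'' has_vector_derivative bt''' t) (at t within {0..tf})"
proof -
  have "((\<lambda>t. D2b (r t)) has_vector_derivative D3b (r t) (p t)) (at t within {0..tf})"
    by (rule has_vector_derivative_chain[OF D2b_deriv r_deriv[OF t]])
  then have "((\<lambda>t. D2b (r t) (p t)) has_vector_derivative (D2b (r t) (acc t) + D3b (r t) (p t) (p t)))
      (at t within {0..tf})"
    by (rule has_vector_derivative_blinfun_apply[OF _ p_deriv_acc[OF t]])
  from has_vector_derivative_blinfun_apply[OF this p_deriv_acc[OF t]]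
    has_vector_derivative_blinfun_apply[OF Db_r_deriv[OF t] acc_deriv[OF t]]
  show ?thesis unfolding bt''_def[abs_def] bt'''_def
    by (rule has_vector_derivative_add)
qed

lemma norm_At''': assumes t: "t \<in> {0..tf}" shows "norm (At''' t) \<le> MAt'''"
proof -
  have rr: "norm (r t) \<le> R" "norm (p t) \<le> R" "norm (acc t) \<le> R" "norm (acc' t) \<le> Kacc'"
    using r_bound p_bound acc_bound norm_acc' t by auto
  have "norm (D2A (r t) (p t) (acc t)) \<le> MA2 * R * R"
    by (intro norm_blinfun_apply_bound) (use bound_D2A rr in auto)
  moreover have "norm ((D2A (r t) (acc t) + D3A (r t) (p t) (p t)) (p t)) \<le> (MA2 * R + MA3 * R * R) * R"
    by (intro norm_blinfun_add_apply_bound norm_blinfun_apply_bound) (use bound_D2A bound_D3A rr R in auto)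
  moreover have "norm (DA (r t) (acc' t)) \<le> MA1 * Kacc'"
    by (intro norm_blinfun_apply_bound) (use bound_DA rr in auto)
  ultimately show ?thesis unfolding At'''_def MAt'''_def using norm_triangle_ineq
    by (smt (verit) distrib_right)
qed

lemma norm_bt''': assumes t: "t \<in> {0..tf}" shows "norm (bt''' t) \<le> Mbt'''"
proof -
  have rr: "norm (r t) \<le> R" "norm (p t) \<le> R" "norm (acc t) \<le> R" "norm (acc' t) \<le> Kacc'"
    using r_bound p_bound acc_bound norm_acc' t by auto
  have "norm (D2b (r t) (p t) (acc t)) \<le> Mb2 * R * R"
    by (intro norm_blinfun_apply_bound) (use bound_D2b rr in auto)
  moreover have "norm ((D2b (r t) (acc t) + D3b (r t) (p t) (p t)) (p t)) \<le> (Mb2 * R + Mb3 * R * R) * R"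
    by (intro norm_blinfun_add_apply_bound norm_blinfun_apply_bound) (use bound_D2b bound_D3b rr R in auto)
  moreover have "norm (Db (r t) (acc' t)) \<le> Mb1 * Kacc'"
    by (intro norm_blinfun_apply_bound) (use bound_Db rr in auto)
  ultimately show ?thesis unfolding bt'''_def Mbt'''_def using norm_triangle_ineq
    by (smt (verit) distrib_right)
qed

lemma xa''_deriv:
  assumes t: "t \<in> {0..tf}"
  shows "(xa'' has_vector_derivative xa''' t) (at t within {0..tf})"
proof (rule has_vector_derivative_linear_solution[OF _ t At_coercive At_deriv[OF t]])
  show "\<forall>s\<in>{0..tf}. At s *v xa'' s = bt'' s - At'' s *v xa s - 2 *\<^sub>R (At' s *v xa' s)"
    using xa''_eq by blast
  show "((\<lambda>s. bt'' s - At'' s *v xa s - 2 *\<^sub>R (At' s *v xa' s)) has_vector_derivative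
      bt''' t - (At'' t *v xa' t + At''' t *v xa t) - 2 *\<^sub>R (At' t *v xa'' t + At'' t *v xa' t))
      (at t within {0..tf})"
    by (intro has_vector_derivative_diff bt''_deriv has_vector_derivative_matrix_vector_mult
        bounded_linear.has_vector_derivative[OF bounded_linear_scaleR_right] At''_deriv At'_deriv
        xa_deriv xa'_deriv t)
  have three: "3 *\<^sub>R u = u + 2 *\<^sub>R u" for u :: "real^'m"
    using scaleR_left_distrib[of 1 2 u] by simp
  have "At t *v xa''' t = bt''' t - At''' t *v xa t - 3 *\<^sub>R (At'' t *v xa' t) - 3 *\<^sub>R (At' t *v xa'' t)"
    unfolding xa'''_def At_def by (rule A_matrix_inv_right)
  then show "At t *v xa''' t = bt''' t - (At'' t *v xa' t + At''' t *v xa t)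
      - 2 *\<^sub>R (At' t *v xa'' t + At'' t *v xa' t) - At' t *v xa'' t"
    unfolding three by (simp add: algebra_simps)
qed

lemma norm_xa''': assumes t: "t \<in> {0..tf}" shows "norm (xa''' t) \<le> Xa3"
proof -
  have "norm (At''' t *v xa t) \<le> MAt''' * Xa0"
    using norm_matrix_vector_mult_bound[OF norm_At'''[OF t]] norm_xa[OF t] optimal_constants_nonneg
    by (smt (verit) mult_left_mono)
  moreover have "norm (At'' t *v xa' t) \<le> MAt'' * Xa1"
    using norm_matrix_vector_mult_bound[OF norm_At''[OF t]] norm_xa'[OF t] bounds_nonneg R
    by (smt (verit) mult_left_mono MAt''_def mult_nonneg_nonneg)
  moreover have "norm (At' t *v xa'' t) \<le> MA1 * R * Xa2"
    using norm_matrix_vector_mult_bound[OF norm_At'[OF t]] norm_xa''[OF t] bounds_nonneg R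
    by (smt (verit) mult_left_mono mult_nonneg_nonneg)
  ultimately have "norm (bt''' t - At''' t *v xa t - 3 *\<^sub>R (At'' t *v xa' t) - 3 *\<^sub>R (At' t *v xa'' t))
      \<le> Mbt''' + MAt''' * Xa0 + 3 * (MAt'' * Xa1) + 3 * (MA1 * R * Xa2)"
    using norm_bt'''[OF t] norm_diff_diff_le[of "bt''' t" "At''' t *v xa t" "3 *\<^sub>R (At'' t *v xa' t)"]
      norm_triangle_ineq4[of "bt''' t - At''' t *v xa t - 3 *\<^sub>R (At'' t *v xa' t)"
        "3 *\<^sub>R (At' t *v xa'' t)"]
    by simp
  then show ?thesis unfolding xa'''_def Xa3_def using norm_At_inv_le c0
    by (meson mult_left_mono order.trans less_imp_le)
qed

text \<open>Integrating the forcing term \<open>- \<epsilon> err' \<bullet> xa''\<close> of the energy by parts removes \<open>err'\<close> from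
  the energy balance; with \<open>err' 0 = 0\<close> the modified energy is then \<open>O(\<epsilon>\<^sup>2)\<close>.\<close>

definition "energy2 t = energy t + eps * (err t \<bullet> xa'' t) + c0 * eps^2 * Xa2^2"

lemma energy2_deriv:
  assumes t: "t \<in> {0..tf}"
  shows "(energy2 has_real_derivative (1/2 * (err t \<bullet> (At' t *v err t)) + eps * (err t \<bullet> xa''' t)))
    (at t within {0..tf})"
proof -
  have "(energy2 has_real_derivative ((- eps * (err' t \<bullet> xa'' t) + 1/2 * (err t \<bullet> (At' t *v err t)))
      + eps * (err t \<bullet> xa''' t + err' t \<bullet> xa'' t)) + 0) (at t within {0..tf})"
    unfolding energy2_def[abs_def]
    by (intro DERIV_add DERIV_cmult energy_deriv[OF t]
        has_real_derivative_inner[OF err_deriv[OF t] xa''_deriv[OF t]] DERIV_const)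
  then show ?thesis by (rule DERIV_cong) (simp add: algebra_simps)
qed
lemma energy_le_energy2: assumes t: "t \<in> {0..tf}" shows "energy t \<le> 2 * energy2 t"
proof -
  define n where "n = norm (err t)"
  define \<beta> where "\<beta> = eps * Xa2"
  have "0 \<le> (n - 2 * c0 * \<beta>)^2" by simp
  then have "4 * c0 * (\<beta> * n) \<le> n^2 + 4 * c0^2 * \<beta>^2" by (simp add: power2_eq_square algebra_simps)
  then have 1: "\<beta> * n \<le> n^2 / (4 * c0) + c0 * \<beta>^2" using c0
    by (simp add: field_simps power2_eq_square)
  have 2: "n^2 / (4 * c0) \<le> energy t / 2" using norm_err_sq_energy[of t] c0 unfolding n_def
    by (simp add: field_simps)
  have 3: "\<bar>eps * (err t \<bullet> xa'' t)\<bar> \<le> \<beta> * n"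
  proof -
    have "\<bar>err t \<bullet> xa'' t\<bar> \<le> n * Xa2" unfolding n_def
      using Cauchy_Schwarz_ineq2[of "err t" "xa'' t"] norm_xa''[OF t]
      by (meson mult_left_mono norm_ge_zero order.trans)
    then show ?thesis using eps by (simp add: abs_mult \<beta>_def algebra_simps mult_left_mono)
  qed
  show ?thesis using 1 2 3 unfolding energy2_def \<beta>_def by (simp add: power_mult_distrib)
qed

lemma energy2_deriv_le: assumes t: "t \<in> {0..tf}"
  shows "1/2 * (err t \<bullet> (At' t *v err t)) + eps * (err t \<bullet> xa''' t) \<le> aW * energy2 t + eps^2 * Xa3^2 / 2"
proof -
  define n where "n = norm (err t)"
  have 1: "err t \<bullet> (At' t *v err t) \<le> MA1 * R * n^2"
  proof -
    have "err t \<bullet> (At' t *v err t) \<le> n * (MA1 * R * n)" unfolding n_def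
      using Cauchy_Schwarz_ineq2[of "err t" "At' t *v err t"]
      norm_matrix_vector_mult_bound[OF norm_At'[OF t], of "err t"]
      by (meson abs_le_D1 mult_left_mono norm_ge_zero order.trans)
    then show ?thesis by (simp add: power2_eq_square algebra_simps)
  qed
  have 2: "eps * (err t \<bullet> xa''' t) \<le> n^2 / 2 + eps^2 * Xa3^2 / 2"
  proof -
    have "err t \<bullet> xa''' t \<le> n * Xa3" unfolding n_def
      using Cauchy_Schwarz_ineq2[of "err t" "xa''' t"] norm_xa'''[OF t]
      by (meson abs_le_D1 mult_left_mono norm_ge_zero order.trans)
    then have "eps * (err t \<bullet> xa''' t) \<le> eps * (n * Xa3)" using eps by (intro mult_left_mono) auto
    moreover have "2 * n * (eps * Xa3) \<le> n^2 + (eps * Xa3)^2" by (rule sum_squares_bound)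
    ultimately show ?thesis by (simp add: power_mult_distrib algebra_simps)
  qed
  have 3: "n^2 \<le> 2 * c0 * energy t" unfolding n_def by (rule norm_err_sq_energy)
  have 4: "energy t \<le> 2 * energy2 t" by (rule energy_le_energy2[OF t])
  have K: "MA1 * R + 1 \<ge> 0" using bounds_nonneg R by simp
  have A: "1/2 * (err t \<bullet> (At' t *v err t)) + eps * (err t \<bullet> xa''' t)
      \<le> (MA1 * R + 1) * n^2 / 2 + eps^2 * Xa3^2 / 2"
  proof -
    have "(MA1 * R + 1) * n^2 / 2 = (MA1 * R * n^2) / 2 + n^2 / 2" by (simp add: algebra_simps)
    then show ?thesis using 1 2 by linarith
  qed
  have B: "(MA1 * R + 1) * n^2 \<le> (MA1 * R + 1) * (2 * c0 * energy t)" using 3 K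
    by (rule mult_left_mono)
  have C: "(MA1 * R + 1) * (2 * c0 * energy t) \<le> (MA1 * R + 1) * (2 * c0 * (2 * energy2 t))"
    using 4 K c0 by (intro mult_left_mono) auto
  have D: "(MA1 * R + 1) * (2 * c0 * (2 * energy2 t)) / 2 = aW * energy2 t"
    by (simp add: aW_def algebra_simps)
  show ?thesis using A B C D by linarith
qed

lemma energy2_le: assumes t: "t \<in> {0..tf}" and err'_0: "err' 0 = 0" shows "energy2 t \<le> KW * eps^2"
proof -
  have "energy2 t \<le> (energy2 0 + eps^2 * Xa3^2 / 2 / aW) * exp (aW * t)"
  proof (rule gronwall_differential
      [where V'="\<lambda>t. 1/2 * (err t \<bullet> (At' t *v err t)) + eps * (err t \<bullet> xa''' t)"])
    show "aW > 0" by (rule optimal_constants_nonneg(6))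
    show "eps^2 * Xa3^2 / 2 \<ge> 0" by simp
    show "\<forall>s\<in>{0..tf}. (energy2 has_real_derivative
        1/2 * (err s \<bullet> (At' s *v err s)) + eps * (err s \<bullet> xa''' s)) (at s within {0..tf})"
      using energy2_deriv by blast
    show "\<forall>s\<in>{0..tf}. 1/2 * (err s \<bullet> (At' s *v err s)) + eps * (err s \<bullet> xa''' s)
        \<le> aW * energy2 s + eps^2 * Xa3^2 / 2"
      using energy2_deriv_le by blast
  qed (rule t)
  also have "energy2 0 = c0 * eps^2 * Xa2^2" by (simp add: energy2_def energy_def err_0 err'_0)
  also have "(c0 * eps^2 * Xa2^2 + eps^2 * Xa3^2 / 2 / aW) * exp (aW * t)
      \<le> (c0 * eps^2 * Xa2^2 + eps^2 * Xa3^2 / 2 / aW) * exp (aW * tf)"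
    using t optimal_constants_nonneg c0 by (intro mult_left_mono exp_mono mult_left_mono) auto
  also have "\<dots> = KW * eps^2" by (simp add: KW_def algebra_simps)
  finally show ?thesis .
qed

lemma norm_err_le_optimal:
  assumes t: "t \<in> {0..tf}" and err'_0: "err' 0 = 0"
  shows "norm (err t) \<le> Ke2 * eps"
proof -
  have "(norm (err t))^2 \<le> 4 * c0 * KW * eps^2"
  proof -
    have "energy t \<le> 2 * (KW * eps^2)" using energy_le_energy2[OF t] energy2_le[OF t err'_0]
      by linarith
    then have "2 * c0 * energy t \<le> 2 * c0 * (2 * (KW * eps^2))" using c0
      by (intro mult_left_mono) auto
    then show ?thesis using norm_err_sq_energy[of t] by (simp add: algebra_simps)
  qed
  then have "norm (err t) \<le> sqrt (4 * c0 * KW * eps^2)" by (simp add: real_le_rsqrt)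
  then show ?thesis using eps by (simp add: Ke2_def real_sqrt_mult)
qed


end


section \<open>Error bounds uniform in \<open>\<epsilon>\<close>\<close>

definition (in xlmd_coefficients) "Ksqrt = Ke + (1 + Lxstar) * (Krp + 2 * R)"
definition (in xlmd_coefficients) "Kopt = Ke2 + Lxstar * Krp"

lemma (in xlmd_coefficients) final_constants_pos: "Ksqrt > 0" "Kopt \<ge> 0"
proof -
  have "0 < (1 + Lxstar) * (Krp + 2 * R)"
    using correction_constants_nonneg R by (intro mult_pos_pos) auto
  then show "Ksqrt > 0" using energy_constants_nonneg by (simp add: Ksqrt_def)
  show "Kopt \<ge> 0" using optimal_constants_nonneg correction_constants_nonneg by (simp add: Kopt_def)
qed

context xlmd_trajectory
begin

lemma x_err_le:
  assumes t: "t \<in> {0..tf}"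
  shows "norm (x t - xs t) \<le> norm (err t) + Lxstar * norm (r t - rs t)"
proof -
  have eq: "x t - xs t = err t + (xstar (r t) - xstar (rs t))"
    by (simp add: err_def xa_xstar xs_xstar[OF t])
  have "norm (xstar (r t) - xstar (rs t)) \<le> Lxstar * norm (r t - rs t)"
    using lipschitz_xstar r_bound[OF t] exact_bounded[OF t] by blast
  then show ?thesis
    unfolding eq using norm_triangle_ineq[of "err t" "xstar (r t) - xstar (rs t)"] by linarith
qed

lemma err_bounds_uniform:
  assumes t: "t \<in> {0..tf}"
  shows "norm (r t - rs t) \<le> (Krp + 2 * R) * sqrt eps" "norm (p t - ps t) \<le> (Krp + 2 * R) * sqrt eps"
proof -
  have K: "Krp \<ge> 0" "2 * R \<ge> 0" using correction_constants_nonneg R by auto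
  have "norm (r t - rs t) \<le> norm (r t) + norm (rs t)" "norm (p t - ps t) \<le> norm (p t) + norm (ps t)"
    by (rule norm_triangle_ineq4)+
  then have "norm (r t - rs t) \<le> 2 * R" "norm (p t - ps t) \<le> 2 * R"
    using bounded[OF t] exact_bounded[OF t] by linarith+
  then show "norm (r t - rs t) \<le> (Krp + 2 * R) * sqrt eps" "norm (p t - ps t) \<le> (Krp + 2 * R) * sqrt eps"
    using r_err[OF t] p_err[OF t] eps K by (blast intro: le_sqrt_if_le_linear_and_bounded)+
qed

lemma error_bounds:
  assumes t: "t \<in> {0..tf}"
  shows "norm (r t - rs t) \<le> Krp * eps" "norm (p t - ps t) \<le> Krp * eps"
    and "norm (r t - rs t) \<le> Ksqrt * sqrt eps" "norm (p t - ps t) \<le> Ksqrt * sqrt eps"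
    and "norm (x t - xs t) \<le> Ksqrt * sqrt eps"
    and "v 0 = xstar_deriv (rs 0) (ps 0) \<Longrightarrow> norm (x t - xs t) \<le> Kopt * eps"
proof -
  have K: "Ke \<ge> 0" "Lxstar \<ge> 0" "Krp + 2 * R \<ge> 0" "sqrt eps \<ge> 0"
    using energy_constants_nonneg correction_constants_nonneg R eps by auto
  show r: "norm (r t - rs t) \<le> Krp * eps" and "norm (p t - ps t) \<le> Krp * eps"
    using r_err[OF t] p_err[OF t] .
  have "0 \<le> Lxstar * (Krp + 2 * R)" using K by simp
  then have "Krp + 2 * R \<le> Ksqrt" unfolding Ksqrt_def distrib_right mult_1 using K by linarith
  then have "(Krp + 2 * R) * sqrt eps \<le> Ksqrt * sqrt eps" by (rule mult_right_mono) (use K in simp)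
  then show "norm (r t - rs t) \<le> Ksqrt * sqrt eps" "norm (p t - ps t) \<le> Ksqrt * sqrt eps"
    using err_bounds_uniform[OF t] by linarith+
  have "Lxstar * norm (r t - rs t) \<le> Lxstar * ((Krp + 2 * R) * sqrt eps)"
    using err_bounds_uniform(1)[OF t] K by (intro mult_left_mono) auto
  then have "norm (x t - xs t) \<le> (Ke + Lxstar * (Krp + 2 * R)) * sqrt eps"
    using x_err_le[OF t] norm_err_le[OF t] unfolding distrib_right mult.assoc by linarith
  also have "\<dots> \<le> Ksqrt * sqrt eps"
    using K by (intro mult_right_mono) (auto simp: Ksqrt_def distrib_right)
  finally show "norm (x t - xs t) \<le> Ksqrt * sqrt eps" .
  have "xa' 0 = xstar_deriv (rs 0) (ps 0)"
    unfolding xa'_def xstar_deriv_def At_def At'_def bt'_def xa_xstar init(3,4) ..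
  moreover assume "v 0 = xstar_deriv (rs 0) (ps 0)"
  ultimately have "err' 0 = 0" by (simp add: err'_def)
  then have "norm (err t) \<le> Ke2 * eps" by (rule norm_err_le_optimal[OF t])
  moreover have "Lxstar * norm (r t - rs t) \<le> Lxstar * (Krp * eps)"
    using r K by (intro mult_left_mono) auto
  ultimately have "norm (x t - xs t) \<le> Ke2 * eps + Lxstar * (Krp * eps)"
    using x_err_le[OF t] by linarith
  then show "norm (x t - xs t) \<le> Kopt * eps" by (simp add: Kopt_def distrib_right)
qed

end

context xlmd_coefficients
begin

lemma xlmd_sol_trajectory:
  assumes "eps > 0" and "xlmd_sol F A b tf eps r p x v" and "exact_sol F A b tf rs ps xs"
    and "\<And>t. t \<in> {0..tf} \<Longrightarrow>
      norm (r t) \<le> R \<and> norm (p t) \<le> R \<and> norm (F (r t) - dQdr A b (r t) (x t)) \<le> R \<and> norm (x t) \<le> R"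
    and "\<And>t. t \<in> {0..tf} \<Longrightarrow> norm (rs t) \<le> R \<and> norm (ps t) \<le> R"
    and "x 0 = xstar (rs 0)" "norm (v 0) \<le> R" "r 0 = rs 0" "p 0 = ps 0"
  shows "xlmd_trajectory F A b DA D2A D3A Db D2b D3b DF c0 R tf MA1 MA2 MA3 Mb0 Mb1 Mb2 Mb3 MF1
    eps r p rs ps x v xs"
proof -
  have xlmd: "(r has_vector_derivative p t) (at t within {0..tf})"
      "(p has_vector_derivative (F (r t) - dQdr A b (r t) (x t))) (at t within {0..tf})"
      "(x has_vector_derivative v t) (at t within {0..tf})"
      "\<exists>v'. (v has_vector_derivative v') (at t within {0..tf}) \<and> eps *\<^sub>R v' = b (r t) - A (r t) *v x t"
    if "t \<in> {0..tf}" for t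
    using assms(2) that unfolding xlmd_sol_def by blast+
  have v_deriv: "(v has_vector_derivative (1/eps) *\<^sub>R (b (r t) - A (r t) *v x t)) (at t within {0..tf})"
    if t: "t \<in> {0..tf}" for t
  proof -
    obtain v' where v': "(v has_vector_derivative v') (at t within {0..tf})"
      "eps *\<^sub>R v' = b (r t) - A (r t) *v x t"
      using xlmd(4)[OF t] by blast
    have "v' = (1/eps) *\<^sub>R (eps *\<^sub>R v')" using \<open>eps > 0\<close> by simp
    with v' show ?thesis by simp
  qed
  have exact: "(rs has_vector_derivative ps t) (at t within {0..tf})"
      "(ps has_vector_derivative (F (rs t) - dQdr A b (rs t) (xs t))) (at t within {0..tf})"
      "A (rs t) *v xs t = b (rs t)"
    if "t \<in> {0..tf}" for t
    using assms(3) that unfolding exact_sol_def by (auto simp: algebra_simps)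
  show ?thesis
    by (intro xlmd_trajectory.intro xlmd_coefficients_axioms xlmd_trajectory_axioms.intro)
      (rule assms(1,4-) xlmd(1-3) v_deriv exact; assumption)+
qed

lemma xstar_deriv_eq_partial_sum:
  "- (matrix_inv (A r) ** (\<Sum>k\<in>UNIV. (q $ k) *\<^sub>R partial A r k) ** matrix_inv (A r)) *v b r
   + matrix_inv (A r) *v (\<Sum>k\<in>UNIV. (q $ k) *\<^sub>R partial b r k) = xstar_deriv r q"
proof -
  have q: "(\<Sum>k\<in>UNIV. (q $ k) *\<^sub>R axis k 1) = q"
    using basis_expansion[of q] by (simp add: scalar_mult_eq_scaleR)
  have "(\<Sum>k\<in>UNIV. (q $ k) *\<^sub>R partial A r k) = DA r q" "(\<Sum>k\<in>UNIV. (q $ k) *\<^sub>R partial b r k) = Db r q"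
    by (subst (2) q[symmetric], simp add: partial_A_eq partial_b_eq blinfun.sum_right blinfun.scaleR_right)+
  moreover have "(- M) *v z = - (M *v z)" for M :: "real^'m^'m" and z
    by (rule bounded_bilinear.minus_left[OF bounded_bilinear_matrix_vector_mult])
  ultimately show ?thesis unfolding xstar_deriv_def xstar_def
    by (simp add: matrix_vector_mul_assoc[symmetric] matrix_vector_mult_diff_distrib)
qed

end


lemma (in xlmd_coefficients) xlmd_convergence:
  assumes exact: "exact_sol F A b tf rs ps xs"
    and xlmd: "\<forall>eps>0. xlmd_sol F A b tf eps (re eps) (pe eps) (xe eps) (xde eps)"
    and bounded: "\<forall>eps>0. \<forall>t\<in>{0..tf}. norm (re eps t) \<le> R \<and> norm (pe eps t) \<le> R \<and>
      norm (F (re eps t) - dQdr A b (re eps t) (xe eps t)) \<le> R \<and> norm (xe eps t) \<le> R"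
    and exact_bounded: "\<forall>t\<in>{0..tf}. norm (rs t) \<le> R \<and> norm (ps t) \<le> R"
    and init: "\<forall>eps>0. xe eps 0 = xstar (rs 0) \<and> norm (xde eps 0) \<le> R \<and> re eps 0 = rs 0 \<and> pe eps 0 = ps 0"
  shows "\<exists>C>0. \<forall>eps>0. \<forall>t\<in>{0..tf}. norm (re eps t - rs t) \<le> C * sqrt eps \<and>
      norm (pe eps t - ps t) \<le> C * sqrt eps \<and> norm (xe eps t - xs t) \<le> C * sqrt eps"
    and "\<exists>C>0. \<forall>eps>0. \<forall>t\<in>{0..tf}. norm (re eps t - rs t) \<le> C * eps \<and> norm (pe eps t - ps t) \<le> C * eps"
    and "(\<forall>eps>0. xde eps 0 = xstar_deriv (rs 0) (ps 0)) \<Longrightarrow>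
      \<exists>C>0. \<forall>eps>0. \<forall>t\<in>{0..tf}. norm (xe eps t - xs t) \<le> C * eps"
proof -
  have traj: "xlmd_trajectory F A b DA D2A D3A Db D2b D3b DF c0 R tf MA1 MA2 MA3 Mb0 Mb1 Mb2 Mb3 MF1
      eps (re eps) (pe eps) rs ps (xe eps) (xde eps) xs" if "eps > 0" for eps
    using that xlmd exact bounded exact_bounded init by (intro xlmd_sol_trajectory) auto
  note bounds = xlmd_trajectory.error_bounds[OF traj]
  have le: "K * eps \<le> (K + 1) * eps" if "eps > 0" for K eps :: real
    using that by (simp add: distrib_right)
  show "\<exists>C>0. \<forall>eps>0. \<forall>t\<in>{0..tf}. norm (re eps t - rs t) \<le> C * sqrt eps \<and>
      norm (pe eps t - ps t) \<le> C * sqrt eps \<and> norm (xe eps t - xs t) \<le> C * sqrt eps"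
    using bounds(3-5) final_constants_pos by blast
  show "\<exists>C>0. \<forall>eps>0. \<forall>t\<in>{0..tf}. norm (re eps t - rs t) \<le> C * eps \<and> norm (pe eps t - ps t) \<le> C * eps"
    using bounds(1,2) le correction_constants_nonneg
    by (intro exI[of _ "Krp + 1"]) (smt (verit))
  assume "\<forall>eps>0. xde eps 0 = xstar_deriv (rs 0) (ps 0)"
  then show "\<exists>C>0. \<forall>eps>0. \<forall>t\<in>{0..tf}. norm (xe eps t - xs t) \<le> C * eps"
    using bounds(6) le final_constants_pos
    by (intro exI[of _ "Kopt + 1"]) (smt (verit))
qed

lemma xlmd_coefficients_exist:
  fixes F :: "real^'n \<Rightarrow> real^'n" and A :: "real^'n \<Rightarrow> real^'m^'m" and b :: "real^'n \<Rightarrow> real^'m"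
  assumes A: "C3_on UNIV A" and b: "C3_on UNIV b" and F: "C2_on UNIV F"
    and symmetric: "\<forall>r. transpose (A r) = A r"
    and coercive: "\<forall>r u. u \<bullet> (A r *v u) \<ge> (1/c0) * (norm u)\<^sup>2"
    and "c0 > 0" "R > 0" "tf > 0"
  obtains DA D2A D3A Db D2b D3b DF MA1 MA2 MA3 Mb0 Mb1 Mb2 Mb3 MF1
  where "xlmd_coefficients F A b DA D2A D3A Db D2b D3b DF c0 R tf MA1 MA2 MA3 Mb0 Mb1 Mb2 Mb3 MF1"
proof -
  obtain DA D2A D3A where A_deriv: "\<And>y. (A has_derivative blinfun_apply (DA y)) (at y)"
    and DA_deriv: "\<And>y. (DA has_derivative blinfun_apply (D2A y)) (at y)"
    and D2A_deriv: "\<And>y. (D2A has_derivative blinfun_apply (D3A y)) (at y)"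
    and "continuous_on UNIV D3A"
    using A unfolding C3_on_def C2_on_def C1_on_def by auto
  obtain Db D2b D3b where b_deriv: "\<And>y. (b has_derivative blinfun_apply (Db y)) (at y)"
    and Db_deriv: "\<And>y. (Db has_derivative blinfun_apply (D2b y)) (at y)"
    and D2b_deriv: "\<And>y. (D2b has_derivative blinfun_apply (D3b y)) (at y)"
    and "continuous_on UNIV D3b"
    using b unfolding C3_on_def C2_on_def C1_on_def by auto
  obtain DF D2F where F_deriv: "\<And>y. (F has_derivative blinfun_apply (DF y)) (at y)"
    and DF_deriv: "\<And>y. (DF has_derivative blinfun_apply (D2F y)) (at y)"
    using F unfolding C2_on_def C1_on_def by auto
  have cont: "continuous_on UNIV f" if "\<And>y. (f has_derivative f' y) (at y)"
    for f :: "real^'n \<Rightarrow> 'b::real_normed_vector" and f'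
    using that by (meson continuous_at_imp_continuous_on has_derivative_continuous)
  obtain MA1 where MA1: "\<forall>y\<in>cball 0 R. norm (DA y) \<le> MA1"
    by (rule continuous_bounded_cball[OF cont[OF DA_deriv]])
  obtain MA2 where MA2: "\<forall>y\<in>cball 0 R. norm (D2A y) \<le> MA2"
    by (rule continuous_bounded_cball[OF cont[OF D2A_deriv]])
  obtain MA3 where MA3: "\<forall>y\<in>cball 0 R. norm (D3A y) \<le> MA3"
    by (rule continuous_bounded_cball[OF \<open>continuous_on UNIV D3A\<close>])
  obtain Mb0 where Mb0: "\<forall>y\<in>cball 0 R. norm (b y) \<le> Mb0"
    by (rule continuous_bounded_cball[OF cont[OF b_deriv]])
  obtain Mb1 where Mb1: "\<forall>y\<in>cball 0 R. norm (Db y) \<le> Mb1"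
    by (rule continuous_bounded_cball[OF cont[OF Db_deriv]])
  obtain Mb2 where Mb2: "\<forall>y\<in>cball 0 R. norm (D2b y) \<le> Mb2"
    by (rule continuous_bounded_cball[OF cont[OF D2b_deriv]])
  obtain Mb3 where Mb3: "\<forall>y\<in>cball 0 R. norm (D3b y) \<le> Mb3"
    by (rule continuous_bounded_cball[OF \<open>continuous_on UNIV D3b\<close>])
  obtain MF1 where MF1: "\<forall>y\<in>cball 0 R. norm (DF y) \<le> MF1"
    by (rule continuous_bounded_cball[OF cont[OF DF_deriv]])
  have "(norm u)\<^sup>2 \<le> c0 * (u \<bullet> (A r *v u))" for r u
    using mult_left_mono[OF coercive[rule_format, of u r], of c0] \<open>c0 > 0\<close> by simp
  then show thesis
    using A_deriv DA_deriv D2A_deriv b_deriv Db_deriv D2b_deriv F_deriv symmetric assms(6-)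
      MA1 MA2 MA3 Mb0 Mb1 Mb2 Mb3 MF1
    by (intro that[of DA D2A D3A Db D2b D3b DF MA1 MA2 MA3 Mb0 Mb1 Mb2 Mb3 MF1] xlmd_coefficients.intro)
      auto
qed

theorem theorem2p4:

  fixes F :: "real^'n \<Rightarrow> real^'n"
    and A :: "real^'n \<Rightarrow> real^'m^'m"
    and b :: "real^'n \<Rightarrow> real^'m"
    and tf :: real
    and rs ps :: "real \<Rightarrow> real^'n" and xs :: "real \<Rightarrow> real^'m"
    and re pe :: "real \<Rightarrow> real \<Rightarrow> real^'n" and xe xde :: "real \<Rightarrow> real \<Rightarrow> real^'m"
  assumes tf_pos: "tf > 0"
    and A_spd: "\<forall>r. transpose (A r) = A r \<and> (\<forall>v. v \<noteq> 0 \<longrightarrow> v \<bullet> (A r *v v) > 0)"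
    and A_C3: "C3_on UNIV A"
    and A_coercive: "\<exists>C>0. \<forall>r v. v \<bullet> (A r *v v) \<ge> (1/C) * (norm v)\<^sup>2"
    and b_C3: "C3_on UNIV b"
    and F_C2: "C2_on UNIV F"
    and exact: "exact_sol F A b tf rs ps xs"
    and xlmd: "\<forall>eps>0. xlmd_sol F A b tf eps (re eps) (pe eps) (xe eps) (xde eps)"
    and init_bdd: "\<exists>B. \<forall>eps>0. norm (rs 0) \<le> B \<and> norm (ps 0) \<le> B \<and>
                      norm (re eps 0) \<le> B \<and> norm (pe eps 0) \<le> B \<and>
                      norm (xe eps 0) \<le> B \<and> norm (xde eps 0) \<le> B"
    and init_eq: "\<forall>eps>0. re eps 0 = rs 0 \<and> pe eps 0 = ps 0"
    and exact_unique: "\<forall>r p x. exact_sol F A b tf r p x \<and> r 0 = rs 0 \<and> p 0 = ps 0 \<longrightarrow>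
                          (\<forall>t\<in>{0..tf}. r t = rs t \<and> p t = ps t \<and> x t = xs t)"
    and xlmd_unique: "\<forall>eps>0. \<forall>r p x xd. xlmd_sol F A b tf eps r p x xd \<and>
                          r 0 = re eps 0 \<and> p 0 = pe eps 0 \<and> x 0 = xe eps 0 \<and> xd 0 = xde eps 0 \<longrightarrow>
                          (\<forall>t\<in>{0..tf}. r t = re eps t \<and> p t = pe eps t \<and> x t = xe eps t \<and> xd t = xde eps t)"
    and rs_C3: "C3_on {0..tf} rs"
    and re_C3: "\<forall>eps>0. C3_on {0..tf} (re eps)"
    and xe_C3: "\<forall>eps>0. C3_on {0..tf} (xe eps)"
    and sol_bdd: "\<exists>C. \<forall>t\<in>{0..tf}.
          norm (rs t) \<le> C \<and> norm (ps t) \<le> C \<and> norm (F (rs t) - dQdr A b (rs t) (xs t)) \<le> C \<and>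
          (\<forall>eps>0. norm (re eps t) \<le> C \<and> norm (pe eps t) \<le> C \<and>
                   norm (F (re eps t) - dQdr A b (re eps t) (xe eps t)) \<le> C \<and>
                   norm (xe eps t) \<le> C \<and> sqrt eps * norm (xde eps t) \<le> C)"
    and compat: "\<forall>eps>0. xe eps 0 = matrix_inv (A (rs 0)) *v b (rs 0)"
  shows "(\<exists>C>0. \<forall>eps>0. \<forall>t\<in>{0..tf}.
             norm (re eps t - rs t) \<le> C * sqrt eps \<and>
             norm (pe eps t - ps t) \<le> C * sqrt eps \<and>
             norm (xe eps t - xs t) \<le> C * sqrt eps)
       \<and> (CARD('m) = 1 \<longrightarrow>
            (\<exists>C>0. \<forall>eps>0. \<forall>t\<in>{0..tf}.
                norm (re eps t - rs t) \<le> C * eps \<and> norm (pe eps t - ps t) \<le> C * eps)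
          \<and> ((\<forall>eps>0. xde eps 0 =
                 - (matrix_inv (A (rs 0)) ** (\<Sum>k\<in>UNIV. (ps 0 $ k) *\<^sub>R partial A (rs 0) k)
                     ** matrix_inv (A (rs 0))) *v b (rs 0)
                 + matrix_inv (A (rs 0)) *v (\<Sum>k\<in>UNIV. (ps 0 $ k) *\<^sub>R partial b (rs 0) k))
             \<longrightarrow> (\<exists>C>0. \<forall>eps>0. \<forall>t\<in>{0..tf}. norm (xe eps t - xs t) \<le> C * eps)))"
proof -
  obtain c0 where c0: "c0 > 0" and coercive: "\<forall>r v. v \<bullet> (A r *v v) \<ge> (1/c0) * (norm v)\<^sup>2"
    using A_coercive by blast
  obtain Cs where Cs: "\<forall>t\<in>{0..tf}. norm (rs t) \<le> Cs \<and> norm (ps t) \<le> Cs \<and>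
      (\<forall>eps>0. norm (re eps t) \<le> Cs \<and> norm (pe eps t) \<le> Cs \<and>
        norm (F (re eps t) - dQdr A b (re eps t) (xe eps t)) \<le> Cs \<and> norm (xe eps t) \<le> Cs)"
    using sol_bdd by meson
  obtain B where B: "\<forall>eps>0. norm (xde eps 0) \<le> B" using init_bdd by meson
  define R where "R = max (max Cs B) 1"
  have R_bounds: "R > 0" "Cs \<le> R" "B \<le> R" by (auto simp: R_def)
  obtain DA D2A D3A Db D2b D3b DF MA1 MA2 MA3 Mb0 Mb1 Mb2 Mb3 MF1
    where "xlmd_coefficients F A b DA D2A D3A Db D2b D3b DF c0 R tf MA1 MA2 MA3 Mb0 Mb1 Mb2 Mb3 MF1"
    using xlmd_coefficients_exist[OF A_C3 b_C3 F_C2 _ coercive c0 R_bounds(1) tf_pos] A_spd by blast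
  then interpret xlmd_coefficients F A b DA D2A D3A Db D2b D3b DF c0 R tf MA1 MA2 MA3 Mb0 Mb1 Mb2 Mb3 MF1 .
  have bounded: "\<forall>eps>0. \<forall>t\<in>{0..tf}. norm (re eps t) \<le> R \<and> norm (pe eps t) \<le> R \<and>
      norm (F (re eps t) - dQdr A b (re eps t) (xe eps t)) \<le> R \<and> norm (xe eps t) \<le> R"
    and exact_bounded: "\<forall>t\<in>{0..tf}. norm (rs t) \<le> R \<and> norm (ps t) \<le> R"
    using Cs R_bounds(2) by (meson order.trans)+
  have init: "\<forall>eps>0. xe eps 0 = xstar (rs 0) \<and> norm (xde eps 0) \<le> R \<and> re eps 0 = rs 0 \<and> pe eps 0 = ps 0"
    using compat B R_bounds(3) init_eq by (auto simp: xstar_def)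
  note convergence = xlmd_convergence[OF exact xlmd bounded exact_bounded init]
  show ?thesis
    using convergence(1,2) convergence(3)[unfolded xstar_deriv_eq_partial_sum[symmetric]] by blast
qed

end
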